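(* Let $\phi:\Gamma\twoheadrightarrow\Lambda$ be an epimorphism of finite-dimensional algebras and $\mathcal M$ a full subcategory of $\mathrm{mod}(\Gamma)$ which contains $\mathrm{mod}(\Lambda)$. Then (1) the poset $\mathrm{widshad}_{\mathcal M}(\Gamma)$ is a complete lattice, and (2) the maps $(-)\cap\mathcal M:\mathrm{wide}(\Gamma)\to\mathrm{widshad}_{\mathcal M}(\Gamma)$ and $(-)\cap\mathrm{mod}(\Lambda):\mathrm{widshad}_{\mathcal M}(\Gamma)\to\mathrm{wide}(\Lambda)$ are surjective meet-semilattice maps.
   Context: $\mathrm{mod}(\Gamma)$ is the category of finitely generated left $\Gamma$-modules; via $\phi$, $\mathrm{mod}(\Lambda)$ is a full subcategory of $\mathrm{mod}(\Gamma)$. Subcategories are full and closed under isomorphism. A subcategory is wide if it is abelian (closed under kernels and cokernels) and closed under extensions; $\mathrm{wide}(\Gamma)$ is the set of wide subcategories ordered by inclusion. For $\mathcal W\in\mathrm{wide}(\Gamma)$ its $\mathcal M$-wide shadow is $\mathcal W\cap\mathcal M$; $\mathrm{widshad}_{\mathcal M}(\Gamma)$ is the poset of all $\mathcal M$-wide shadows ordered by inclusion. *)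

theory Defs
  imports "Jordan_Normal_Form.Matrix"
begin

text \<open>A finite-dimensional algebra over a field 'k is modelled as a ring type with unit
  together with a central unital ring homomorphism iota from 'k (the structure map),
  such that the algebra is spanned over 'k by a finite set.\<close>

definition fd_algebra :: "('k::field \<Rightarrow> 'g::{ring,monoid_mult}) \<Rightarrow> bool" where
  "fd_algebra \<iota> \<longleftrightarrow>
     (\<forall>a b. \<iota> (a + b) = \<iota> a + \<iota> b) \<and> (\<forall>a b. \<iota> (a * b) = \<iota> a * \<iota> b) \<and> \<iota> 1 = 1 \<and>
     (\<forall>a g. \<iota> a * g = g * \<iota> a) \<and>
     (\<exists>B. finite B \<and> (\<forall>g. \<exists>c. g = (\<Sum>b\<in>B. \<iota> (c b) * b)))"

definition alg_epi :: "('k::field \<Rightarrow> 'g::{ring,monoid_mult}) \<Rightarrow> ('k \<Rightarrow> 'l::{ring,monoid_mult})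
     \<Rightarrow> ('g \<Rightarrow> 'l) \<Rightarrow> bool" where
  "alg_epi \<iota>G \<iota>L \<phi> \<longleftrightarrow>
     (\<forall>a b. \<phi> (a + b) = \<phi> a + \<phi> b) \<and> (\<forall>a b. \<phi> (a * b) = \<phi> a * \<phi> b) \<and> \<phi> 1 = 1 \<and>
     (\<forall>c. \<phi> (\<iota>G c) = \<iota>L c) \<and> surj \<phi>"

text \<open>A finitely generated (= finite-dimensional over 'k) left module of dimension n,
  given by its representation: an algebra homomorphism into n x n matrices over 'k.\<close>
definition is_rep :: "('k::field \<Rightarrow> 'g::{ring,monoid_mult}) \<Rightarrow> nat \<Rightarrow> ('g \<Rightarrow> 'k mat) \<Rightarrow> bool" where
  "is_rep \<iota> n \<rho> \<longleftrightarrow>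
     (\<forall>g. \<rho> g \<in> carrier_mat n n) \<and>
     (\<forall>a b. \<rho> (a + b) = \<rho> a + \<rho> b) \<and> (\<forall>a b. \<rho> (a * b) = \<rho> a * \<rho> b) \<and>
     \<rho> 1 = 1\<^sub>m n \<and> (\<forall>c. \<rho> (\<iota> c) = c \<cdot>\<^sub>m 1\<^sub>m n)"

definition mods :: "('k::field \<Rightarrow> 'g::{ring,monoid_mult}) \<Rightarrow> ('g \<Rightarrow> 'k mat) set" where
  "mods \<iota> = {\<rho>. \<exists>n. is_rep \<iota> n \<rho>}"

definition rdim :: "('g::{ring,monoid_mult} \<Rightarrow> 'k::field mat) \<Rightarrow> nat" where
  "rdim \<rho> = dim_row (\<rho> 1)"

definition is_hom :: "('g::{ring,monoid_mult} \<Rightarrow> 'k::field mat) \<Rightarrow> ('g \<Rightarrow> 'k mat) \<Rightarrow> 'k mat \<Rightarrow> bool" where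
  "is_hom \<rho> \<sigma> F \<longleftrightarrow> F \<in> carrier_mat (rdim \<sigma>) (rdim \<rho>) \<and> (\<forall>g. F * \<rho> g = \<sigma> g * F)"

definition is_iso :: "('g::{ring,monoid_mult} \<Rightarrow> 'k::field mat) \<Rightarrow> ('g \<Rightarrow> 'k mat) \<Rightarrow> 'k mat \<Rightarrow> bool" where
  "is_iso \<rho> \<sigma> F \<longleftrightarrow> is_hom \<rho> \<sigma> F \<and>
     (\<exists>G. is_hom \<sigma> \<rho> G \<and> G * F = 1\<^sub>m (rdim \<rho>) \<and> F * G = 1\<^sub>m (rdim \<sigma>))"

definition mono_mat :: "'k::field mat \<Rightarrow> bool" where
  "mono_mat F \<longleftrightarrow> (\<forall>v\<in>carrier_vec (dim_col F). F *\<^sub>v v = 0\<^sub>v (dim_row F) \<longrightarrow> v = 0\<^sub>v (dim_col F))"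

definition epi_mat :: "'k::field mat \<Rightarrow> bool" where
  "epi_mat F \<longleftrightarrow> (\<forall>w\<in>carrier_vec (dim_row F). \<exists>v\<in>carrier_vec (dim_col F). F *\<^sub>v v = w)"

definition exact_at :: "'k::field mat \<Rightarrow> 'k mat \<Rightarrow> bool" where
  "exact_at f g \<longleftrightarrow> (\<forall>v\<in>carrier_vec (dim_col g).
      g *\<^sub>v v = 0\<^sub>v (dim_row g) \<longleftrightarrow> (\<exists>u\<in>carrier_vec (dim_col f). v = f *\<^sub>v u))"

text \<open>Subcategories: full (so given by their objects) and closed under isomorphism.\<close>
definition subcat :: "('k::field \<Rightarrow> 'g::{ring,monoid_mult}) \<Rightarrow> ('g \<Rightarrow> 'k mat) set \<Rightarrow> bool" where
  "subcat \<iota> S \<longleftrightarrow> S \<subseteq> mods \<iota> \<and>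
     (\<forall>\<rho>\<in>S. \<forall>\<sigma>\<in>mods \<iota>. (\<exists>F. is_iso \<rho> \<sigma> F) \<longrightarrow> \<sigma> \<in> S)"

definition closed_kernels :: "('k::field \<Rightarrow> 'g::{ring,monoid_mult}) \<Rightarrow> ('g \<Rightarrow> 'k mat) set \<Rightarrow> bool" where
  "closed_kernels \<iota> S \<longleftrightarrow> (\<forall>M\<in>S. \<forall>N\<in>S. \<forall>f K i. K \<in> mods \<iota> \<and> is_hom M N f \<and> is_hom K M i \<and>
      mono_mat i \<and> exact_at i f \<longrightarrow> K \<in> S)"

definition closed_cokernels :: "('k::field \<Rightarrow> 'g::{ring,monoid_mult}) \<Rightarrow> ('g \<Rightarrow> 'k mat) set \<Rightarrow> bool" where
  "closed_cokernels \<iota> S \<longleftrightarrow> (\<forall>M\<in>S. \<forall>N\<in>S. \<forall>f C p. C \<in> mods \<iota> \<and> is_hom M N f \<and> is_hom N C p \<and>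
      epi_mat p \<and> exact_at f p \<longrightarrow> C \<in> S)"

definition closed_extensions :: "('k::field \<Rightarrow> 'g::{ring,monoid_mult}) \<Rightarrow> ('g \<Rightarrow> 'k mat) set \<Rightarrow> bool" where
  "closed_extensions \<iota> S \<longleftrightarrow> (\<forall>A\<in>S. \<forall>C\<in>S. \<forall>B f g. B \<in> mods \<iota> \<and> is_hom A B f \<and> is_hom B C g \<and>
      mono_mat f \<and> epi_mat g \<and> exact_at f g \<longrightarrow> B \<in> S)"

text \<open>Wide subcategories: nonempty (an abelian category has a zero object), closed under
  kernels, cokernels and extensions.\<close>
definition wide :: "('k::field \<Rightarrow> 'g::{ring,monoid_mult}) \<Rightarrow> ('g \<Rightarrow> 'k mat) set \<Rightarrow> bool" where
  "wide \<iota> S \<longleftrightarrow> subcat \<iota> S \<and> S \<noteq> {} \<and> closed_kernels \<iota> S \<and> closed_cokernels \<iota> S \<and>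
     closed_extensions \<iota> S"

definition wideset :: "('k::field \<Rightarrow> 'g::{ring,monoid_mult}) \<Rightarrow> ('g \<Rightarrow> 'k mat) set set" where
  "wideset \<iota> = {S. wide \<iota> S}"

definition widshad :: "('k::field \<Rightarrow> 'g::{ring,monoid_mult}) \<Rightarrow> ('g \<Rightarrow> 'k mat) set
     \<Rightarrow> ('g \<Rightarrow> 'k mat) set set" where
  "widshad \<iota> M = {W \<inter> M | W. wide \<iota> W}"

text \<open>(-) intersected with mod(Lambda), viewed as a subcategory of mod(Lambda) via phi.\<close>
definition res_mod :: "('g \<Rightarrow> 'l) \<Rightarrow> ('k::field \<Rightarrow> 'l::{ring,monoid_mult}) \<Rightarrow> ('g \<Rightarrow> 'k mat) set
     \<Rightarrow> ('l \<Rightarrow> 'k mat) set" where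
  "res_mod \<phi> \<iota>L S = {\<sigma> \<in> mods \<iota>L. \<sigma> \<circ> \<phi> \<in> S}"

definition is_lub :: "'a set set \<Rightarrow> 'a set set \<Rightarrow> 'a set \<Rightarrow> bool" where
  "is_lub P A s \<longleftrightarrow> s \<in> P \<and> (\<forall>a\<in>A. a \<subseteq> s) \<and> (\<forall>t\<in>P. (\<forall>a\<in>A. a \<subseteq> t) \<longrightarrow> s \<subseteq> t)"

definition is_glb :: "'a set set \<Rightarrow> 'a set set \<Rightarrow> 'a set \<Rightarrow> bool" where
  "is_glb P A s \<longleftrightarrow> s \<in> P \<and> (\<forall>a\<in>A. s \<subseteq> a) \<and> (\<forall>t\<in>P. (\<forall>a\<in>A. t \<subseteq> a) \<longrightarrow> t \<subseteq> s)"

definition complete_lattice_poset :: "'a set set \<Rightarrow> bool" where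
  "complete_lattice_poset P \<longleftrightarrow> (\<forall>A \<subseteq> P. (\<exists>s. is_lub P A s) \<and> (\<exists>s. is_glb P A s))"

definition meet_semilattice_poset :: "'a set set \<Rightarrow> bool" where
  "meet_semilattice_poset P \<longleftrightarrow> (\<forall>x\<in>P. \<forall>y\<in>P. \<exists>z. is_glb P {x, y} z)"

definition meet_semilattice_map :: "'a set set \<Rightarrow> 'b set set \<Rightarrow> ('a set \<Rightarrow> 'b set) \<Rightarrow> bool" where
  "meet_semilattice_map P Q f \<longleftrightarrow> meet_semilattice_poset P \<and> meet_semilattice_poset Q \<and>
     (\<forall>x\<in>P. f x \<in> Q) \<and>
     (\<forall>x\<in>P. \<forall>y\<in>P. \<forall>z. is_glb P {x, y} z \<longrightarrow> is_glb Q {f x, f y} (f z))"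

end

theory Submission
  imports Defs "Jordan_Normal_Form.DL_Rank" "Jordan_Normal_Form.Matrix_Kernel"
begin

text \<open>
  Arbitrary intersections of wide subcategories are wide. Hence the \<open>\<M>\<close>-wide shadows are
  closed under intersections taken inside \<open>\<M>\<close>, which makes them a complete lattice, and both
  maps preserve binary intersections, that is, meets.

  For surjectivity onto \<open>wide(\<Lambda>)\<close>, take \<open>\<V>\<close> wide in \<open>mod(\<Lambda>)\<close> and let \<open>Filt(\<V>)\<close> be the
  \<open>\<Gamma>\<close>-modules with a finite filtration whose factors lie in \<open>\<V>\<close>. It is closed under extensions
  by construction, and under kernels and cokernels of maps \<open>f : X \<rightarrow> Y\<close> by induction on the
  filtrations of \<open>X\<close> and \<open>Y\<close>: splitting \<open>X\<close> or \<open>Y\<close> along a short exact sequence, the snake lemma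
  exhibits the kernel and cokernel of \<open>f\<close> as extensions of kernels and cokernels of smaller maps.
  A \<open>\<Lambda>\<close>-module in \<open>Filt(\<V>)\<close> has all its filtration factors in \<open>mod(\<Lambda>)\<close>, which is closed under
  submodules and quotients in \<open>mod(\<Gamma>)\<close>, so it lies in \<open>\<V>\<close> as \<open>\<V>\<close> is closed under extensions.
  Thus \<open>Filt(\<V>) \<inter> mod(\<Lambda>) = \<V>\<close>.
\<close>

section \<open>Matrices as linear maps\<close>

lemma mult_unit_vec_eq_col:
  fixes A :: "'k::field mat"
  assumes "A \<in> carrier_mat m n" and "j < n"
  shows "A *\<^sub>v unit_vec n j = col A j"
proof -
  have "col (A * 1\<^sub>m n) j = A *\<^sub>v col (1\<^sub>m n) j" using assms by (intro col_mult2) auto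
  then show ?thesis using assms by simp
qed

lemma mono_matI:
  "i \<in> carrier_mat r c \<Longrightarrow> (\<And>v. v \<in> carrier_vec c \<Longrightarrow> i *\<^sub>v v = 0\<^sub>v r \<Longrightarrow> v = 0\<^sub>v c) \<Longrightarrow> mono_mat i"
  unfolding mono_mat_def by auto

lemma mono_matD:
  "mono_mat i \<Longrightarrow> i \<in> carrier_mat r c \<Longrightarrow> v \<in> carrier_vec c \<Longrightarrow> i *\<^sub>v v = 0\<^sub>v r \<Longrightarrow> v = 0\<^sub>v c"
  unfolding mono_mat_def by auto

lemma epi_matI:
  "p \<in> carrier_mat r c \<Longrightarrow> (\<And>w. w \<in> carrier_vec r \<Longrightarrow> \<exists>v\<in>carrier_vec c. p *\<^sub>v v = w) \<Longrightarrow> epi_mat p"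
  unfolding epi_mat_def by auto

lemma epi_matD:
  "epi_mat p \<Longrightarrow> p \<in> carrier_mat r c \<Longrightarrow> w \<in> carrier_vec r \<Longrightarrow> \<exists>v\<in>carrier_vec c. p *\<^sub>v v = w"
  unfolding epi_mat_def by auto

lemma exact_atI:
  assumes "f \<in> carrier_mat m n" and "i \<in> carrier_mat n d"
    and "\<And>v. v \<in> carrier_vec n \<Longrightarrow> f *\<^sub>v v = 0\<^sub>v m \<Longrightarrow> \<exists>u\<in>carrier_vec d. v = i *\<^sub>v u"
    and "\<And>u. u \<in> carrier_vec d \<Longrightarrow> f *\<^sub>v (i *\<^sub>v u) = 0\<^sub>v m"
  shows "exact_at i f"
  using assms unfolding exact_at_def by auto

lemma exact_atD:
  "exact_at i f \<Longrightarrow> f \<in> carrier_mat m n \<Longrightarrow> i \<in> carrier_mat n d \<Longrightarrow> v \<in> carrier_vec n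
    \<Longrightarrow> f *\<^sub>v v = 0\<^sub>v m \<Longrightarrow> \<exists>u\<in>carrier_vec d. v = i *\<^sub>v u"
  unfolding exact_at_def by auto

lemma exact_at_mult_vec_zero:
  "exact_at i f \<Longrightarrow> f \<in> carrier_mat m n \<Longrightarrow> i \<in> carrier_mat n d \<Longrightarrow> u \<in> carrier_vec d
    \<Longrightarrow> f *\<^sub>v (i *\<^sub>v u) = 0\<^sub>v m"
  unfolding exact_at_def by (metis carrier_matD mult_mat_vec_carrier)

lemma exact_at_mult_zero:
  fixes f :: "'k::field mat"
  assumes f: "f \<in> carrier_mat m n" and g: "g \<in> carrier_mat l m" and ex: "exact_at f g"
  shows "g * f = 0\<^sub>m l n"
proof (rule mat_col_eqI)
  fix j assume "j < dim_col (0\<^sub>m l n)"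
  then have j: "j < n" by simp
  have "col (g * f) j = g *\<^sub>v (f *\<^sub>v unit_vec n j)"
    using f g j mult_unit_vec_eq_col[OF f j] by (simp only: col_mult2)
  also have "\<dots> = 0\<^sub>v l" using exact_at_mult_vec_zero[OF ex g f] by simp
  finally show "col (g * f) j = col (0\<^sub>m l n) j" using j by simp
qed (use f g in auto)

lemma mult_mat_vec_zero:
  fixes A :: "'k::field mat"
  shows "A \<in> carrier_mat m n \<Longrightarrow> A *\<^sub>v 0\<^sub>v n = 0\<^sub>v m"
  by (intro eq_vecI) (auto simp: scalar_prod_def)

lemma mono_mat_inj:
  fixes i :: "'k::field mat"
  assumes mo: "mono_mat i" and i: "i \<in> carrier_mat r c" and v: "v \<in> carrier_vec c"
    and w: "w \<in> carrier_vec c" and eq: "i *\<^sub>v v = i *\<^sub>v w"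
  shows "v = w"
proof -
  have "i *\<^sub>v (v - w) = i *\<^sub>v v - i *\<^sub>v w" using i v w by (rule mult_minus_distrib_mat_vec)
  also have "\<dots> = 0\<^sub>v r" unfolding eq using i w by simp
  finally have vw: "v - w = 0\<^sub>v c" using mono_matD[OF mo i] v w by simp
  show ?thesis
  proof (rule eq_vecI)
    fix j assume "j < dim_vec w"
    then have "(v - w) $ j = 0" and "j < c" using vw w by auto
    then show "v $ j = w $ j" using v w by simp
  qed (use v w in simp)
qed

lemma mono_mat_cancel_left:
  fixes f :: "'k::field mat"
  assumes mo: "mono_mat f" and f: "f \<in> carrier_mat m n" and A: "A \<in> carrier_mat n k"
    and B: "B \<in> carrier_mat n k" and eq: "f * A = f * B"
  shows "A = B"
proof (rule mat_col_eqI)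
  fix j assume "j < dim_col B"
  then have j: "j < k" using B by auto
  have "f *\<^sub>v col A j = f *\<^sub>v col B j"
    using f A B j eq by (metis carrier_matD(2) col_mult2)
  then show "col A j = col B j" using mono_mat_inj[OF mo f] A B j by auto
qed (use A B in auto)

lemma epi_mat_cancel_right:
  fixes g :: "'k::field mat"
  assumes ep: "epi_mat g" and g: "g \<in> carrier_mat m n" and A: "A \<in> carrier_mat k m"
    and B: "B \<in> carrier_mat k m" and eq: "A * g = B * g"
  shows "A = B"
proof (rule mat_col_eqI)
  fix j assume "j < dim_col B"
  then have j: "j < m" using B by auto
  obtain v where v: "v \<in> carrier_vec n" "g *\<^sub>v v = unit_vec m j"
    using epi_matD[OF ep g] by (meson unit_vec_carrier)
  have "col A j = (A * g) *\<^sub>v v" using v A g mult_unit_vec_eq_col[OF A j] by simp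
  also have "\<dots> = col B j" using v B g mult_unit_vec_eq_col[OF B j] eq by simp
  finally show "col A j = col B j" .
qed (use A B in auto)

lemma mono_mat_mult:
  fixes a :: "'k::field mat"
  assumes a: "a \<in> carrier_mat n m" and b: "b \<in> carrier_mat m k" and "mono_mat a" and "mono_mat b"
  shows "mono_mat (a * b)"
proof (rule mono_matI)
  show "a * b \<in> carrier_mat n k" using a b by simp
  fix v :: "'k vec" assume v: "v \<in> carrier_vec k" and "(a * b) *\<^sub>v v = 0\<^sub>v n"
  then have "a *\<^sub>v (b *\<^sub>v v) = 0\<^sub>v n" using a b by simp
  then have "b *\<^sub>v v = 0\<^sub>v m" using mono_matD[OF \<open>mono_mat a\<close> a] b v by simp
  then show "v = 0\<^sub>v k" using mono_matD[OF \<open>mono_mat b\<close> b v] by simp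
qed

lemma mono_mat_mult_right:
  fixes a :: "'k::field mat"
  assumes a: "a \<in> carrier_mat n m" and b: "b \<in> carrier_mat m k" and mab: "mono_mat (a * b)"
  shows "mono_mat b"
proof (rule mono_matI[OF b])
  fix v :: "'k vec" assume v: "v \<in> carrier_vec k" and "b *\<^sub>v v = 0\<^sub>v m"
  then have "(a * b) *\<^sub>v v = 0\<^sub>v n" using a b mult_mat_vec_zero[OF a] by simp
  then show "v = 0\<^sub>v k" using mono_matD[OF mab mult_carrier_mat[OF a b] v] by simp
qed

lemma epi_mat_mult:
  fixes a :: "'k::field mat"
  assumes a: "a \<in> carrier_mat n m" and b: "b \<in> carrier_mat m k" and "epi_mat a" and "epi_mat b"
  shows "epi_mat (a * b)"
proof (rule epi_matI)
  show "a * b \<in> carrier_mat n k" using a b by simp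
  fix w :: "'k vec" assume "w \<in> carrier_vec n"
  then obtain u where u: "u \<in> carrier_vec m" "a *\<^sub>v u = w" using epi_matD[OF \<open>epi_mat a\<close> a] by blast
  obtain v where v: "v \<in> carrier_vec k" "b *\<^sub>v v = u" using epi_matD[OF \<open>epi_mat b\<close> b u(1)] by blast
  show "\<exists>v\<in>carrier_vec k. (a * b) *\<^sub>v v = w" using a b u v by (intro bexI[of _ v]) auto
qed

lemma epi_mat_mult_left:
  fixes a :: "'k::field mat"
  assumes a: "a \<in> carrier_mat n m" and b: "b \<in> carrier_mat m k" and eab: "epi_mat (a * b)"
  shows "epi_mat a"
proof (rule epi_matI[OF a])
  fix w :: "'k vec" assume "w \<in> carrier_vec n"
  then obtain v where v: "v \<in> carrier_vec k" "(a * b) *\<^sub>v v = w"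
    using epi_matD[OF eab] a b by (metis mult_carrier_mat)
  show "\<exists>u\<in>carrier_vec m. a *\<^sub>v u = w" using a b v by (intro bexI[of _ "b *\<^sub>v v"]) auto
qed

lemma factor_by_columns:
  fixes i :: "'k::field mat"
  assumes i: "i \<in> carrier_mat n d" and h: "h \<in> carrier_mat n k"
    and cols: "\<And>j. j < k \<Longrightarrow> \<exists>u\<in>carrier_vec d. col h j = i *\<^sub>v u"
  shows "\<exists>h'\<in>carrier_mat d k. h = i * h'"
proof -
  obtain U where U: "\<And>j. j < k \<Longrightarrow> U j \<in> carrier_vec d \<and> col h j = i *\<^sub>v U j"
    using cols by metis
  define h' where "h' = mat_of_cols d (map U [0..<k])"
  have h': "h' \<in> carrier_mat d k" unfolding h'_def using mat_of_cols_carrier(1)[of d "map U [0..<k]"] by simp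
  have "h = i * h'"
  proof (rule mat_col_eqI)
    fix j assume "j < dim_col (i * h')"
    then have j: "j < k" using h' by simp
    have "col (i * h') j = i *\<^sub>v col h' j" using i h' j by (simp only: col_mult2)
    also have "col h' j = U j" unfolding h'_def using j U by simp
    finally show "col h j = col (i * h') j" using U j by simp
  qed (use i h h' in auto)
  then show ?thesis using h' by blast
qed

lemma factor_through_kernel:
  fixes f :: "'k::field mat"
  assumes f: "f \<in> carrier_mat m n" and i: "i \<in> carrier_mat n d" and ex: "exact_at i f"
    and h: "h \<in> carrier_mat n k" and z: "f * h = 0\<^sub>m m k"
  shows "\<exists>h'\<in>carrier_mat d k. h = i * h'"
proof (rule factor_by_columns[OF i h])
  fix j assume j: "j < k"
  have "f *\<^sub>v col h j = col (f * h) j" using f h j by (simp only: col_mult2)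
  also have "\<dots> = 0\<^sub>v m" using z j by simp
  finally show "\<exists>u\<in>carrier_vec d. col h j = i *\<^sub>v u" using exact_atD[OF ex f i] h j by simp
qed

lemma epi_mat_right_inverse:
  fixes p :: "'k::field mat"
  assumes p: "p \<in> carrier_mat e m" and ep: "epi_mat p"
  obtains R where "R \<in> carrier_mat m e" and "p * R = 1\<^sub>m e"
proof -
  have "\<exists>R\<in>carrier_mat m e. 1\<^sub>m e = p * R"
  proof (rule factor_by_columns[OF p])
    fix j assume "j < e"
    then show "\<exists>u\<in>carrier_vec m. col (1\<^sub>m e) j = p *\<^sub>v u"
      using epi_matD[OF ep p] by (metis col_one unit_vec_carrier)
  qed simp
  then show thesis using that by metis
qed

text \<open>Since \<open>ker p = im f\<close>, the matrix \<open>1 - R * p\<close> factors through \<open>f\<close>, so \<open>h * f = 0\<close>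
  forces \<open>h = (h * R) * p\<close>.\<close>
lemma factor_through_cokernel:
  fixes f :: "'k::field mat"
  assumes f: "f \<in> carrier_mat m n" and p: "p \<in> carrier_mat e m" and ep: "epi_mat p"
    and ex: "exact_at f p" and h: "h \<in> carrier_mat k m" and z: "h * f = 0\<^sub>m k n"
  shows "\<exists>h'\<in>carrier_mat k e. h = h' * p"
proof -
  obtain R where R: "R \<in> carrier_mat m e" "p * R = 1\<^sub>m e" using epi_mat_right_inverse[OF p ep] .
  define D where "D = 1\<^sub>m m - R * p"
  have D: "D \<in> carrier_mat m m" unfolding D_def using R p by auto
  have "p * D = p * 1\<^sub>m m - p * (R * p)"
    unfolding D_def using p R by (intro mult_minus_distrib_mat) auto
  also have "p * (R * p) = (p * R) * p" using assoc_mult_mat[OF p R(1) p] by simp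
  also have "(p * R) * p = p" using p R by simp
  also have "p * 1\<^sub>m m - p = 0\<^sub>m e m" using p by simp
  finally have "p * D = 0\<^sub>m e m" .
  then obtain Z where Z: "Z \<in> carrier_mat n m" "D = f * Z"
    using factor_through_kernel[OF p f ex D] by blast
  have "h * D = h * 1\<^sub>m m - h * (R * p)" unfolding D_def using h R p by (intro mult_minus_distrib_mat) auto
  moreover have "h * D = 0\<^sub>m k m" using Z z h f by (simp flip: assoc_mult_mat)
  ultimately have hRp: "h - h * (R * p) = 0\<^sub>m k m" using h by simp
  have "h = h * (R * p)"
  proof (rule eq_matI)
    fix i j assume "i < dim_row (h * (R * p))" "j < dim_col (h * (R * p))"
    moreover from this have "(h - h * (R * p)) $$ (i, j) = 0" using hRp h R p by simp
    ultimately show "h $$ (i, j) = (h * (R * p)) $$ (i, j)" using h R p by simp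
  qed (use h R p in auto)
  then show ?thesis using h R p by (intro bexI[of _ "h * R"]) (auto simp: assoc_mult_mat)
qed

section \<open>Existence of kernels and cokernels\<close>

lemma (in vec_space) mat_of_cols_image_iff_span:
  assumes xs: "set xs \<subseteq> carrier_vec n" and dist: "distinct xs"
  shows "(\<exists>u\<in>carrier_vec (length xs). v = mat_of_cols n xs *\<^sub>v u) \<longleftrightarrow> v \<in> span (set xs)"
proof -
  let ?A = "mat_of_cols n xs"
  have A: "?A \<in> carrier_mat n (length xs)" and cols: "cols ?A = xs" using xs by auto
  show ?thesis
  proof
    assume "\<exists>u\<in>carrier_vec (length xs). v = ?A *\<^sub>v u"
    then obtain u where u: "u \<in> carrier_vec (length xs)" "v = ?A *\<^sub>v u" by blast
    have "lincomb (\<lambda>a. u $ find_first a xs) (set xs) = v"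
      using lincomb_eq_mat_mult[OF A u(1)] cols dist u(2) by simp
    then show "v \<in> span (set xs)" using xs by (auto intro!: exI[of _ "\<lambda>a. u $ find_first a xs"])
  next
    assume "v \<in> span (set xs)"
    then obtain a where "lincomb a (set xs) = v" using finite_in_span[OF _ xs] by auto
    then show "\<exists>u\<in>carrier_vec (length xs). v = ?A *\<^sub>v u"
      using mat_mult_eq_lincomb[OF A] cols dist by (intro bexI[of _ "vec (length xs) (\<lambda>j. a (col ?A j))"]) auto
  qed
qed

lemma kernel_mat_exists:
  fixes f :: "'k::field mat"
  assumes f: "f \<in> carrier_mat m n"
  obtains d i where "i \<in> carrier_mat n d" and "mono_mat i" and "exact_at i f"
proof -
  interpret K: kernel m n f using f by unfold_locales
  obtain B where B: "finite B" "K.basis B" using kernel_basis_exists[OF f] by blast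
  have Bk: "B \<subseteq> mat_kernel f" and indpt: "\<not> K.NC.lin_dep B" and span: "K.NC.span B = mat_kernel f"
    using B(2) K.lindep_same K.span_same unfolding K.Ker.basis_def by auto
  have Bc: "B \<subseteq> carrier_vec n" using Bk mat_kernel[OF f] by auto
  obtain xs where xs: "set xs = B" "distinct xs" using finite_distinct_list[OF B(1)] by blast
  define i where "i = mat_of_cols n xs"
  have i: "i \<in> carrier_mat n (length xs)" and cols: "cols i = xs" unfolding i_def using xs Bc by auto
  have "mono_mat i"
  proof (rule mono_matI[OF i])
    fix v assume "v \<in> carrier_vec (length xs)" and "i *\<^sub>v v = 0\<^sub>v n"
    then show "v = 0\<^sub>v (length xs)" using K.NC.lin_depI[OF i] indpt cols xs by blast
  qed
  moreover have "exact_at i f"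
  proof (rule exact_atI[OF f i])
    fix v :: "'k vec" assume "v \<in> carrier_vec n" and "f *\<^sub>v v = 0\<^sub>v m"
    then have "v \<in> K.NC.span (set xs)" using span xs mat_kernelI[OF f] by blast
    then show "\<exists>u\<in>carrier_vec (length xs). v = i *\<^sub>v u"
      using K.NC.mat_of_cols_image_iff_span Bc xs unfolding i_def by blast
  next
    fix u :: "'k vec" assume "u \<in> carrier_vec (length xs)"
    then have "i *\<^sub>v u \<in> mat_kernel f"
      using K.NC.mat_of_cols_image_iff_span Bc xs span unfolding i_def by blast
    then show "f *\<^sub>v (i *\<^sub>v u) = 0\<^sub>v m" using mat_kernelD[OF f] by blast
  qed
  ultimately show thesis using that i by blast
qed

lemma pivot_fun_structure:
  fixes C :: "'k::field mat"
  assumes C: "C \<in> carrier_mat m n" and piv: "pivot_fun C pf n"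
  obtains r where "r \<le> m"
    and "\<And>i j. r \<le> i \<Longrightarrow> i < m \<Longrightarrow> j < n \<Longrightarrow> C $$ (i, j) = 0"
    and "\<And>i. i < r \<Longrightarrow> pf i < n"
    and "\<And>i i'. i < r \<Longrightarrow> i' < m \<Longrightarrow> C $$ (i', pf i) = (if i' = i then 1 else 0)"
proof -
  have dC: "dim_row C = m" using C by simp
  note pD = pivot_funD[OF dC piv]
  have zero_rows_stay: "pf i' = n" if "i \<le> i'" "i' < m" "pf i = n" for i i'
    using pivot_bound[OF dC piv, of i "i' - i"] pD(1)[OF that(2)] that by auto
  define r where "r = (LEAST i. i = m \<or> pf i = n)"
  have r: "r \<le> m" unfolding r_def by (rule Least_le) simp
  have r_iff: "pf i = n \<longleftrightarrow> r \<le> i" if "i < m" for i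
  proof
    assume "pf i = n" then show "r \<le> i" unfolding r_def by (intro Least_le) simp
  next
    assume "r \<le> i"
    moreover have "r = m \<or> pf r = n" unfolding r_def by (rule LeastI[of _ m]) simp
    ultimately show "pf i = n" using that zero_rows_stay[of r i] by auto
  qed
  have "pf i < n" if "i < r" for i using pD(1)[of i] r_iff[of i] that r by fastforce
  moreover have "C $$ (i, j) = 0" if "r \<le> i" "i < m" "j < n" for i j
    using pD(2)[OF that(2)] r_iff[OF that(2)] that by auto
  moreover have "C $$ (i', pf i) = (if i' = i then 1 else 0)" if "i < r" "i' < m" for i i'
    using pD(4)[of i] pD(5)[of i i'] \<open>i < r \<Longrightarrow> pf i < n\<close> that r by auto
  ultimately show thesis using that r by blast
qed

lemma row_echelon_image_iff:
  fixes C :: "'k::field mat"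
  assumes C: "C \<in> carrier_mat m n" and ref: "row_echelon_form C"
  obtains r where "r \<le> m"
    and "\<And>x. x \<in> carrier_vec m \<Longrightarrow> (\<exists>u\<in>carrier_vec n. C *\<^sub>v u = x) \<longleftrightarrow> (\<forall>i\<in>{r..<m}. x $ i = 0)"
proof -
  obtain pf where "pivot_fun C pf n" using ref C unfolding row_echelon_form_def by auto
  then obtain r where r: "r \<le> m" and zero: "\<And>i j. r \<le> i \<Longrightarrow> i < m \<Longrightarrow> j < n \<Longrightarrow> C $$ (i, j) = 0"
    and pf: "\<And>i. i < r \<Longrightarrow> pf i < n"
    and unit: "\<And>i i'. i < r \<Longrightarrow> i' < m \<Longrightarrow> C $$ (i', pf i) = (if i' = i then 1 else 0)"
    using pivot_fun_structure[OF C] by metis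
  define E :: "'k mat" where "E = mat n r (\<lambda>(j, i). if j = pf i then 1 else 0)"
  have E: "E \<in> carrier_mat n r" unfolding E_def by simp
  have CE: "(C * E) $$ (i', i) = (if i' = i then 1 else 0)" if "i' < m" "i < r" for i' i
  proof -
    have "(C * E) $$ (i', i) = (\<Sum>j\<in>{0..<n}. C $$ (i', j) * (if j = pf i then 1 else 0))"
      unfolding times_mat_def scalar_prod_def using C E that by (auto simp: E_def intro!: sum.cong)
    also have "\<dots> = C $$ (i', pf i)" using pf[OF that(2)] by (simp add: if_distrib sum.delta cong: if_cong)
    finally show ?thesis using unit that by simp
  qed
  have "(\<exists>u\<in>carrier_vec n. C *\<^sub>v u = x) \<longleftrightarrow> (\<forall>i\<in>{r..<m}. x $ i = 0)" if x: "x \<in> carrier_vec m" for x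
  proof
    assume "\<exists>u\<in>carrier_vec n. C *\<^sub>v u = x"
    then show "\<forall>i\<in>{r..<m}. x $ i = 0" using C zero by (auto simp: scalar_prod_def intro!: sum.neutral)
  next
    assume x0: "\<forall>i\<in>{r..<m}. x $ i = 0"
    define xr where "xr = vec r (\<lambda>i. x $ i)"
    have "(C * E) *\<^sub>v xr = x"
    proof (rule eq_vecI)
      fix i' assume "i' < dim_vec x"
      then have i': "i' < m" using x by simp
      have "((C * E) *\<^sub>v xr) $ i' = (\<Sum>i\<in>{0..<r}. (if i' = i then 1 else 0) * x $ i)"
        unfolding mult_mat_vec_def scalar_prod_def using C E i' CE by (auto simp: xr_def intro!: sum.cong)
      also have "\<dots> = (\<Sum>i\<in>{0..<r}. if i = i' then x $ i else 0)" by (intro sum.cong) auto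
      also have "\<dots> = x $ i'" using x0 i' by (simp add: sum.delta)
      finally show "((C * E) *\<^sub>v xr) $ i' = x $ i'" .
    qed (use C E x in auto)
    then show "\<exists>u\<in>carrier_vec n. C *\<^sub>v u = x" using C E by (intro bexI[of _ "E *\<^sub>v xr"]) (auto simp: xr_def)
  qed
  then show thesis using that r by blast
qed

text \<open>With \<open>C = P * f\<close> in row echelon form, the rows of \<open>P\<close> below the nonzero rows of \<open>C\<close>
  form a cokernel of \<open>f\<close>.\<close>
lemma cokernel_mat_exists:
  fixes f :: "'k::field mat"
  assumes f: "f \<in> carrier_mat m n"
  obtains e p where "p \<in> carrier_mat e m" and "epi_mat p" and "exact_at f p"
proof -
  define C where "C = gauss_jordan_single f"
  note gj = gauss_jordan_single[OF f C_def[symmetric]]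
  obtain P Q where CP: "C = P * f" and P: "P \<in> carrier_mat m m" and Q: "Q \<in> carrier_mat m m"
    and PQ: "P * Q = 1\<^sub>m m" and QP: "Q * P = 1\<^sub>m m" using gj(4) by blast
  obtain r where r: "r \<le> m"
    and image: "\<And>x. x \<in> carrier_vec m \<Longrightarrow> (\<exists>u\<in>carrier_vec n. C *\<^sub>v u = x) \<longleftrightarrow> (\<forall>i\<in>{r..<m}. x $ i = 0)"
    using row_echelon_image_iff[OF gj(2,3)] by metis
  define p where "p = mat (m - r) m (\<lambda>(a, b). P $$ (r + a, b))"
  have p: "p \<in> carrier_mat (m - r) m" unfolding p_def by simp
  have pw: "(p *\<^sub>v w) $ a = (P *\<^sub>v w) $ (r + a)" if "w \<in> carrier_vec m" "a < m - r" for w a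
    using that P unfolding p_def by (auto simp: scalar_prod_def)
  have epi: "epi_mat p"
  proof (rule epi_matI[OF p])
    fix z :: "'k vec" assume z: "z \<in> carrier_vec (m - r)"
    define x where "x = vec m (\<lambda>i. if r \<le> i then z $ (i - r) else 0)"
    have "P *\<^sub>v (Q *\<^sub>v x) = x" using P Q PQ by (simp add: x_def flip: assoc_mult_mat_vec)
    then have "p *\<^sub>v (Q *\<^sub>v x) = z" using pw[of "Q *\<^sub>v x"] p Q z by (intro eq_vecI) (auto simp: x_def)
    then show "\<exists>v\<in>carrier_vec m. p *\<^sub>v v = z" using Q by (intro bexI[of _ "Q *\<^sub>v x"]) (auto simp: x_def)
  qed
  have QP_vec: "Q *\<^sub>v (P *\<^sub>v x) = x" if "x \<in> carrier_vec m" for x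
    using that P Q QP by (simp flip: assoc_mult_mat_vec)
  have "p *\<^sub>v w = 0\<^sub>v (m - r) \<longleftrightarrow> (\<exists>u\<in>carrier_vec n. w = f *\<^sub>v u)"
    if w: "w \<in> carrier_vec m" for w
  proof -
    have "p *\<^sub>v w = 0\<^sub>v (m - r) \<longleftrightarrow> (\<forall>a<m - r. (P *\<^sub>v w) $ (r + a) = 0)"
      using pw[OF w] p by (auto simp: vec_eq_iff)
    also have "\<dots> \<longleftrightarrow> (\<forall>i\<in>{r..<m}. (P *\<^sub>v w) $ i = 0)"
      by (auto, metis atLeastLessThan_iff diff_less_mono le_add_diff_inverse)
    also have "\<dots> \<longleftrightarrow> (\<exists>u\<in>carrier_vec n. P *\<^sub>v (f *\<^sub>v u) = P *\<^sub>v w)"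
      using image[of "P *\<^sub>v w"] P w f CP by (simp add: assoc_mult_mat_vec)
    also have "\<dots> \<longleftrightarrow> (\<exists>u\<in>carrier_vec n. w = f *\<^sub>v u)"
      using QP_vec w f by (metis mult_mat_vec_carrier)
    finally show ?thesis .
  qed
  then have "exact_at f p" unfolding exact_at_def using p f by auto
  with epi p show thesis using that by blast
qed

section \<open>Snake-lemma diagram chases\<close>

text \<open>Kernels along an extension of the domain: given a short exact sequence
  \<open>0 \<rightarrow> X\<^sub>1 \<rightarrow>\<^bsub>a\<^esub> X \<rightarrow>\<^bsub>b\<^esub> X\<^sub>2 \<rightarrow> 0\<close>, a map \<open>f : X \<rightarrow> Y\<close>, the cokernel \<open>q\<close> of \<open>f * a\<close> and the map
  \<open>f2 : X\<^sub>2 \<rightarrow> coker (f * a)\<close> induced by \<open>f\<close>, the kernels \<open>i1, i, i2\<close> of \<open>f * a, f, f2\<close> form a short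
  exact sequence \<open>0 \<rightarrow> ker (f * a) \<rightarrow>\<^bsub>s\<^esub> ker f \<rightarrow>\<^bsub>t\<^esub> ker f2 \<rightarrow> 0\<close>.\<close>
locale kernel_snake =
  fixes a b f q f2 i1 i i2 s t :: "'k::field mat"
    and n1 n n2 m l k1 k k2 :: nat
  assumes a: "a \<in> carrier_mat n n1" and b: "b \<in> carrier_mat n2 n"
    and mono_a: "mono_mat a" and epi_b: "epi_mat b" and exact_ab: "exact_at a b"
    and f: "f \<in> carrier_mat m n" and q: "q \<in> carrier_mat l m" and exact_q: "exact_at (f * a) q"
    and f2: "f2 \<in> carrier_mat l n2" and qf: "q * f = f2 * b"
    and i1: "i1 \<in> carrier_mat n1 k1" and mono_i1: "mono_mat i1" and exact_i1: "exact_at i1 (f * a)"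
    and i: "i \<in> carrier_mat n k" and mono_i: "mono_mat i" and exact_i: "exact_at i f"
    and i2: "i2 \<in> carrier_mat n2 k2" and mono_i2: "mono_mat i2" and exact_i2: "exact_at i2 f2"
    and s: "s \<in> carrier_mat k k1" and s_eq: "a * i1 = i * s"
    and t: "t \<in> carrier_mat k2 k" and t_eq: "b * i = i2 * t"
begin

lemma mono_s: "mono_mat s"
  using mono_mat_mult[OF a i1 mono_a mono_i1] mono_mat_mult_right[OF i s] s_eq by simp

lemma epi_t: "epi_mat t"
proof (rule epi_matI[OF t])
  fix w :: "'k vec" assume w: "w \<in> carrier_vec k2"
  obtain x where x: "x \<in> carrier_vec n" "b *\<^sub>v x = i2 *\<^sub>v w" using epi_matD[OF epi_b b] i2 w by (meson mult_mat_vec_carrier)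
  have "q *\<^sub>v (f *\<^sub>v x) = f2 *\<^sub>v (i2 *\<^sub>v w)"
    using x q f f2 b by (metis assoc_mult_mat_vec qf)
  also have "\<dots> = 0\<^sub>v l" using exact_at_mult_vec_zero[OF exact_i2 f2 i2 w] .
  finally obtain y where y: "y \<in> carrier_vec n1" "f *\<^sub>v x = (f * a) *\<^sub>v y"
    using exact_atD[OF exact_q q _ ] f a x by (metis mult_carrier_mat mult_mat_vec_carrier)
  have "f *\<^sub>v (x - a *\<^sub>v y) = 0\<^sub>v m"
    using y x f a by (simp add: mult_minus_distrib_mat_vec)
  then obtain z where z: "z \<in> carrier_vec k" "x - a *\<^sub>v y = i *\<^sub>v z"
    using exact_atD[OF exact_i f i] x a y by (meson minus_carrier_vec mult_mat_vec_carrier)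
  have "i2 *\<^sub>v (t *\<^sub>v z) = b *\<^sub>v (x - a *\<^sub>v y)" using z i2 t b i t_eq by (simp flip: assoc_mult_mat_vec)
  also have "\<dots> = i2 *\<^sub>v w"
    using x y a b i2 w exact_at_mult_vec_zero[OF exact_ab b a y(1)] by (simp add: mult_minus_distrib_mat_vec)
  finally have "t *\<^sub>v z = w" using mono_mat_inj[OF mono_i2 i2] t z w by simp
  then show "\<exists>v\<in>carrier_vec k. t *\<^sub>v v = w" using z by blast
qed

lemma exact_s_t: "exact_at s t"
proof (rule exact_atI[OF t s])
  fix z :: "'k vec" assume z: "z \<in> carrier_vec k" and tz: "t *\<^sub>v z = 0\<^sub>v k2"
  have "b *\<^sub>v (i *\<^sub>v z) = i2 *\<^sub>v (t *\<^sub>v z)" using z b i i2 t t_eq by (simp flip: assoc_mult_mat_vec)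
  then have "b *\<^sub>v (i *\<^sub>v z) = 0\<^sub>v n2" using tz mult_mat_vec_zero[OF i2] by simp
  then obtain x1 where x1: "x1 \<in> carrier_vec n1" "i *\<^sub>v z = a *\<^sub>v x1"
    using exact_atD[OF exact_ab b a] i z by (meson mult_mat_vec_carrier)
  have "(f * a) *\<^sub>v x1 = f *\<^sub>v (i *\<^sub>v z)" using x1 f a by simp
  also have "\<dots> = 0\<^sub>v m" using exact_at_mult_vec_zero[OF exact_i f i z] .
  finally obtain w where w: "w \<in> carrier_vec k1" "x1 = i1 *\<^sub>v w"
    using exact_atD[OF exact_i1 _ i1 x1(1)] f a by (meson mult_carrier_mat)
  have "i *\<^sub>v z = i *\<^sub>v (s *\<^sub>v w)" using x1 w a i1 i s s_eq by (simp flip: assoc_mult_mat_vec)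
  then have "z = s *\<^sub>v w" using mono_mat_inj[OF mono_i i] z s w by simp
  then show "\<exists>u\<in>carrier_vec k1. z = s *\<^sub>v u" using w by blast
next
  fix u :: "'k vec" assume u: "u \<in> carrier_vec k1"
  have "i2 *\<^sub>v (t *\<^sub>v (s *\<^sub>v u)) = b *\<^sub>v (i *\<^sub>v (s *\<^sub>v u))"
    using assoc_mult_mat_vec[OF i2 t, of "s *\<^sub>v u"] assoc_mult_mat_vec[OF b i, of "s *\<^sub>v u"] t_eq s u
    by simp
  also have "i *\<^sub>v (s *\<^sub>v u) = a *\<^sub>v (i1 *\<^sub>v u)"
    using u a i i1 s s_eq by (simp flip: assoc_mult_mat_vec)
  also have "b *\<^sub>v (a *\<^sub>v (i1 *\<^sub>v u)) = 0\<^sub>v n2" using exact_at_mult_vec_zero[OF exact_ab b a] i1 u by simp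
  finally show "t *\<^sub>v (s *\<^sub>v u) = 0\<^sub>v k2" using mono_matD[OF mono_i2 i2] t s u by simp
qed

end

text \<open>Dually, cokernels along an extension of the codomain: given
  \<open>0 \<rightarrow> Y\<^sub>1 \<rightarrow>\<^bsub>c\<^esub> Y \<rightarrow>\<^bsub>d\<^esub> Y\<^sub>2 \<rightarrow> 0\<close>, a map \<open>f : X \<rightarrow> Y\<close>, the kernel \<open>k\<close> of \<open>d * f\<close> and the map
  \<open>g : ker (d * f) \<rightarrow> Y\<^sub>1\<close> induced by \<open>f\<close>, the cokernels \<open>p1, p, p2\<close> of \<open>g, f, d * f\<close> form a short
  exact sequence \<open>0 \<rightarrow> coker g \<rightarrow>\<^bsub>s\<^esub> coker f \<rightarrow>\<^bsub>t\<^esub> coker (d * f) \<rightarrow> 0\<close>.\<close>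
locale cokernel_snake =
  fixes c d f k g p1 p p2 s t :: "'k::field mat"
    and m1 m m2 n e l1 l l2 :: nat
  assumes c: "c \<in> carrier_mat m m1" and d: "d \<in> carrier_mat m2 m"
    and mono_c: "mono_mat c" and epi_d: "epi_mat d" and exact_cd: "exact_at c d"
    and f: "f \<in> carrier_mat m n" and k: "k \<in> carrier_mat n e" and exact_k: "exact_at k (d * f)"
    and g: "g \<in> carrier_mat m1 e" and fk: "f * k = c * g"
    and p1: "p1 \<in> carrier_mat l1 m1" and epi_p1: "epi_mat p1" and exact_p1: "exact_at g p1"
    and p: "p \<in> carrier_mat l m" and epi_p: "epi_mat p" and exact_p: "exact_at f p"
    and p2: "p2 \<in> carrier_mat l2 m2" and epi_p2: "epi_mat p2" and exact_p2: "exact_at (d * f) p2"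
    and s: "s \<in> carrier_mat l l1" and s_eq: "p * c = s * p1"
    and t: "t \<in> carrier_mat l2 l" and t_eq: "p2 * d = t * p"
begin

lemma epi_t: "epi_mat t"
  using epi_mat_mult_left[OF t p] epi_mat_mult[OF p2 d epi_p2 epi_d] t_eq by simp

lemma mono_s: "mono_mat s"
proof (rule mono_matI[OF s])
  fix v :: "'k vec" assume v: "v \<in> carrier_vec l1" and sv: "s *\<^sub>v v = 0\<^sub>v l"
  obtain y1 where y1: "y1 \<in> carrier_vec m1" "p1 *\<^sub>v y1 = v" using epi_matD[OF epi_p1 p1 v] by blast
  have "p *\<^sub>v (c *\<^sub>v y1) = s *\<^sub>v (p1 *\<^sub>v y1)"
    using assoc_mult_mat_vec[OF p c y1(1)] assoc_mult_mat_vec[OF s p1 y1(1)] s_eq by simp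
  also have "\<dots> = 0\<^sub>v l" using y1 sv by simp
  finally obtain x where x: "x \<in> carrier_vec n" "c *\<^sub>v y1 = f *\<^sub>v x"
    using exact_atD[OF exact_p p f _] c y1 by (meson mult_mat_vec_carrier)
  have "(d * f) *\<^sub>v x = d *\<^sub>v (c *\<^sub>v y1)" using x d f by simp
  also have "\<dots> = 0\<^sub>v m2" using exact_at_mult_vec_zero[OF exact_cd d c y1(1)] .
  finally obtain w where w: "w \<in> carrier_vec e" "x = k *\<^sub>v w"
    using exact_atD[OF exact_k _ k x(1)] d f by (meson mult_carrier_mat)
  have "c *\<^sub>v y1 = c *\<^sub>v (g *\<^sub>v w)"
    using x w assoc_mult_mat_vec[OF f k w(1)] assoc_mult_mat_vec[OF c g w(1)] fk by simp
  then have "y1 = g *\<^sub>v w" using mono_mat_inj[OF mono_c c] y1 g w by simp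
  then show "v = 0\<^sub>v l1" using y1 exact_at_mult_vec_zero[OF exact_p1 p1 g w(1)] by simp
qed

lemma exact_s_t: "exact_at s t"
proof (rule exact_atI[OF t s])
  fix z :: "'k vec" assume z: "z \<in> carrier_vec l" and tz: "t *\<^sub>v z = 0\<^sub>v l2"
  obtain y where y: "y \<in> carrier_vec m" "p *\<^sub>v y = z" using epi_matD[OF epi_p p z] by blast
  have "p2 *\<^sub>v (d *\<^sub>v y) = t *\<^sub>v (p *\<^sub>v y)"
    using assoc_mult_mat_vec[OF p2 d y(1)] assoc_mult_mat_vec[OF t p y(1)] t_eq by simp
  also have "\<dots> = 0\<^sub>v l2" using y tz by simp
  finally obtain x where x: "x \<in> carrier_vec n" "d *\<^sub>v y = (d * f) *\<^sub>v x"
    using exact_atD[OF exact_p2 p2 mult_carrier_mat[OF d f]] d y by (meson mult_mat_vec_carrier)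
  have "d *\<^sub>v (y - f *\<^sub>v x) = 0\<^sub>v m2" using x y d f by (simp add: mult_minus_distrib_mat_vec)
  then obtain y1 where y1: "y1 \<in> carrier_vec m1" "y - f *\<^sub>v x = c *\<^sub>v y1"
    using exact_atD[OF exact_cd d c] y f x by (meson minus_carrier_vec mult_mat_vec_carrier)
  have "y = f *\<^sub>v x + c *\<^sub>v y1"
  proof (rule eq_vecI)
    fix j assume "j < dim_vec (f *\<^sub>v x + c *\<^sub>v y1)"
    then show "y $ j = (f *\<^sub>v x + c *\<^sub>v y1) $ j"
      using arg_cong[OF y1(2), of "\<lambda>v. v $ j"] y f c by (auto simp: algebra_simps)
  qed (use y f c in auto)
  then have "z = p *\<^sub>v (f *\<^sub>v x) + p *\<^sub>v (c *\<^sub>v y1)"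
    using y x y1 p f c by (simp add: mult_add_distrib_mat_vec)
  also have "\<dots> = s *\<^sub>v (p1 *\<^sub>v y1)"
    using exact_at_mult_vec_zero[OF exact_p p f x(1)] assoc_mult_mat_vec[OF p c y1(1)]
      assoc_mult_mat_vec[OF s p1 y1(1)] s_eq s p1 p c y1 by simp
  finally show "\<exists>u\<in>carrier_vec l1. z = s *\<^sub>v u" using p1 y1 by (intro bexI[of _ "p1 *\<^sub>v y1"]) auto
next
  fix u :: "'k vec" assume u: "u \<in> carrier_vec l1"
  obtain y1 where y1: "y1 \<in> carrier_vec m1" "p1 *\<^sub>v y1 = u" using epi_matD[OF epi_p1 p1 u] by blast
  have cy1: "c *\<^sub>v y1 \<in> carrier_vec m" using c y1 by simp
  have "t *\<^sub>v (s *\<^sub>v u) = t *\<^sub>v (p *\<^sub>v (c *\<^sub>v y1))"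
    using y1 assoc_mult_mat_vec[OF s p1 y1(1)] assoc_mult_mat_vec[OF p c y1(1)] s_eq by simp
  also have "\<dots> = p2 *\<^sub>v (d *\<^sub>v (c *\<^sub>v y1))"
    using assoc_mult_mat_vec[OF t p cy1] assoc_mult_mat_vec[OF p2 d cy1] t_eq by simp
  also have "\<dots> = 0\<^sub>v l2" using exact_at_mult_vec_zero[OF exact_cd d c y1(1)] mult_mat_vec_zero[OF p2] by simp
  finally show "t *\<^sub>v (s *\<^sub>v u) = 0\<^sub>v l2" .
qed

end

lemma exact_at_cancel_epis:
  fixes f :: "'k::field mat"
  assumes b: "b \<in> carrier_mat n2 n" and epi_b: "epi_mat b"
    and f: "f \<in> carrier_mat m n" and q: "q \<in> carrier_mat l m" and epi_q: "epi_mat q"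
    and f2: "f2 \<in> carrier_mat l n2" and qf: "q * f = f2 * b"
    and p2: "p2 \<in> carrier_mat e l" and exact_p: "exact_at f (p2 * q)"
  shows "exact_at f2 p2"
proof (rule exact_atI[OF p2 f2])
  fix z :: "'k vec" assume z: "z \<in> carrier_vec l" and "p2 *\<^sub>v z = 0\<^sub>v e"
  moreover obtain y where y: "y \<in> carrier_vec m" "q *\<^sub>v y = z" using epi_matD[OF epi_q q z] by blast
  ultimately have "(p2 * q) *\<^sub>v y = 0\<^sub>v e" using p2 q by simp
  then obtain x where x: "x \<in> carrier_vec n" "y = f *\<^sub>v x"
    using exact_atD[OF exact_p mult_carrier_mat[OF p2 q] f y(1)] by blast
  have "z = f2 *\<^sub>v (b *\<^sub>v x)"
    using y x assoc_mult_mat_vec[OF q f x(1)] assoc_mult_mat_vec[OF f2 b x(1)] qf by simp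
  then show "\<exists>u\<in>carrier_vec n2. z = f2 *\<^sub>v u" using b x by (intro bexI[of _ "b *\<^sub>v x"]) auto
next
  fix u :: "'k vec" assume "u \<in> carrier_vec n2"
  then obtain x where x: "x \<in> carrier_vec n" "b *\<^sub>v x = u" using epi_matD[OF epi_b b] by blast
  have "p2 *\<^sub>v (f2 *\<^sub>v u) = (p2 * q) *\<^sub>v (f *\<^sub>v x)"
    using x assoc_mult_mat_vec[OF q f x(1)] assoc_mult_mat_vec[OF f2 b x(1)] qf p2 q f by simp
  also have "\<dots> = 0\<^sub>v e" using exact_at_mult_vec_zero[OF exact_p mult_carrier_mat[OF p2 q] f x(1)] .
  finally show "p2 *\<^sub>v (f2 *\<^sub>v u) = 0\<^sub>v e" .
qed

lemma exact_at_cancel_monos: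
  fixes f :: "'k::field mat"
  assumes c: "c \<in> carrier_mat m m1" and mono_c: "mono_mat c"
    and f: "f \<in> carrier_mat m n" and k: "k \<in> carrier_mat n e" and mono_k: "mono_mat k"
    and g: "g \<in> carrier_mat m1 e" and fk: "f * k = c * g"
    and i: "i \<in> carrier_mat e r" and exact_i: "exact_at (k * i) f"
  shows "exact_at i g"
proof (rule exact_atI[OF g i])
  fix w :: "'k vec" assume w: "w \<in> carrier_vec e" and "g *\<^sub>v w = 0\<^sub>v m1"
  then have "f *\<^sub>v (k *\<^sub>v w) = 0\<^sub>v m"
    using assoc_mult_mat_vec[OF f k w] assoc_mult_mat_vec[OF c g w] fk mult_mat_vec_zero[OF c] by simp
  then obtain u where u: "u \<in> carrier_vec r" "k *\<^sub>v w = (k * i) *\<^sub>v u"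
    using exact_atD[OF exact_i f mult_carrier_mat[OF k i]] k w by (meson mult_mat_vec_carrier)
  then have "w = i *\<^sub>v u" using mono_mat_inj[OF mono_k k] w k i by simp
  then show "\<exists>u\<in>carrier_vec r. w = i *\<^sub>v u" using u by blast
next
  fix u :: "'k vec" assume u: "u \<in> carrier_vec r"
  then have iu: "i *\<^sub>v u \<in> carrier_vec e" using i by simp
  have "c *\<^sub>v (g *\<^sub>v (i *\<^sub>v u)) = f *\<^sub>v ((k * i) *\<^sub>v u)"
    using assoc_mult_mat_vec[OF f k iu] assoc_mult_mat_vec[OF c g iu] fk k i u by simp
  also have "\<dots> = 0\<^sub>v m" using exact_at_mult_vec_zero[OF exact_i f mult_carrier_mat[OF k i] u] .
  finally show "g *\<^sub>v (i *\<^sub>v u) = 0\<^sub>v m1" using mono_matD[OF mono_c c] g iu by simp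
qed

section \<open>Modules as matrix representations\<close>

lemma is_rep_carrier: "is_rep \<iota> n \<rho> \<Longrightarrow> \<rho> g \<in> carrier_mat n n"
  unfolding is_rep_def by auto

lemma is_rep_rdim: "is_rep \<iota> n \<rho> \<Longrightarrow> rdim \<rho> = n"
  unfolding is_rep_def rdim_def by auto

lemma mods_is_rep: "\<rho> \<in> mods \<iota> \<Longrightarrow> is_rep \<iota> (rdim \<rho>) \<rho>"
  unfolding mods_def using is_rep_rdim by fastforce

lemma is_rep_mods: "is_rep \<iota> n \<rho> \<Longrightarrow> \<rho> \<in> mods \<iota>"
  unfolding mods_def by auto

lemma mods_carrier: "\<rho> \<in> mods \<iota> \<Longrightarrow> \<rho> g \<in> carrier_mat (rdim \<rho>) (rdim \<rho>)"
  using is_rep_carrier[OF mods_is_rep] by blast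

lemma is_hom_carrier: "is_hom \<rho> \<sigma> f \<Longrightarrow> f \<in> carrier_mat (rdim \<sigma>) (rdim \<rho>)"
  unfolding is_hom_def by auto

lemma is_hom_commute: "is_hom \<rho> \<sigma> f \<Longrightarrow> f * \<rho> g = \<sigma> g * f"
  unfolding is_hom_def by auto

lemma is_hom_mult:
  assumes X: "X \<in> mods \<iota>" and Y: "Y \<in> mods \<iota>" and Z: "Z \<in> mods \<iota>"
    and f: "is_hom X Y f" and g: "is_hom Y Z g"
  shows "is_hom X Z (g * f)"
proof -
  note fc = is_hom_carrier[OF f] and gc = is_hom_carrier[OF g]
  note Xc = mods_carrier[OF X] and Yc = mods_carrier[OF Y] and Zc = mods_carrier[OF Z]
  have "(g * f) * X h = Z h * (g * f)" for h
  proof -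
    have "(g * f) * X h = g * (f * X h)" by (rule assoc_mult_mat[OF gc fc Xc])
    also have "\<dots> = (g * Y h) * f" using is_hom_commute[OF f] assoc_mult_mat[OF gc Yc fc] by simp
    also have "\<dots> = Z h * (g * f)" using is_hom_commute[OF g] assoc_mult_mat[OF Zc gc fc] by simp
    finally show ?thesis .
  qed
  then show ?thesis unfolding is_hom_def using fc gc by auto
qed

lemma is_rep_through_mono:
  fixes \<iota> :: "'k::field \<Rightarrow> 'a::{ring,monoid_mult}"
  assumes X: "is_rep \<iota> n X" and i: "i \<in> carrier_mat n d" and mono: "mono_mat i"
    and K: "\<And>g. K g \<in> carrier_mat d d" and XK: "\<And>g. X g * i = i * K g"
  shows "is_rep \<iota> d K"
proof -
  note Xc = is_rep_carrier[OF X] and XX = X[unfolded is_rep_def]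
  note cancel = mono_mat_cancel_left[OF mono i K]
  have "K (a + b) = K a + K b" for a b
    by (rule cancel)
      (use K XX add_mult_distrib_mat[OF Xc Xc i] mult_add_distrib_mat[OF i K K] in \<open>simp_all add: XK[symmetric]\<close>)
  moreover have "K (a * b) = K a * K b" for a b
  proof (rule cancel)
    have "i * K (a * b) = X a * (X b * i)" using XK[symmetric] XX assoc_mult_mat[OF Xc Xc i] by simp
    also have "\<dots> = i * (K a * K b)"
      using XK assoc_mult_mat[OF Xc i K] assoc_mult_mat[OF i K K] by simp
    finally show "i * K (a * b) = i * (K a * K b)" .
  qed (rule mult_carrier_mat[OF K K])
  moreover have "K 1 = 1\<^sub>m d"
    by (rule cancel) (use i XX in \<open>simp_all add: XK[symmetric]\<close>)
  moreover have "K (\<iota> c) = c \<cdot>\<^sub>m 1\<^sub>m d" for c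
    by (rule cancel) (use i XX mult_smult_assoc_mat[OF one_carrier_mat i]
        mult_smult_distrib[OF i one_carrier_mat] in \<open>simp_all add: XK[symmetric]\<close>)
  ultimately show ?thesis unfolding is_rep_def using K by blast
qed

lemma is_rep_through_epi:
  fixes \<iota> :: "'k::field \<Rightarrow> 'a::{ring,monoid_mult}"
  assumes Y: "is_rep \<iota> m Y" and p: "p \<in> carrier_mat e m" and epi: "epi_mat p"
    and C: "\<And>g. C g \<in> carrier_mat e e" and CY: "\<And>g. C g * p = p * Y g"
  shows "is_rep \<iota> e C"
proof -
  note Yc = is_rep_carrier[OF Y] and YY = Y[unfolded is_rep_def]
  note cancel = epi_mat_cancel_right[OF epi p C]
  have "C (a + b) = C a + C b" for a b
    by (rule cancel)
      (use C YY add_mult_distrib_mat[OF C C p] mult_add_distrib_mat[OF p Yc Yc] in \<open>simp_all add: CY\<close>)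
  moreover have "C (a * b) = C a * C b" for a b
  proof (rule cancel)
    have "C (a * b) * p = (p * Y a) * Y b" using CY YY assoc_mult_mat[OF p Yc Yc] by simp
    also have "\<dots> = (C a * C b) * p"
      using CY[symmetric] assoc_mult_mat[OF C p Yc] assoc_mult_mat[OF C C p] by simp
    finally show "C (a * b) * p = (C a * C b) * p" .
  qed (rule mult_carrier_mat[OF C C])
  moreover have "C 1 = 1\<^sub>m e"
    by (rule cancel) (use p YY in \<open>simp_all add: CY\<close>)
  moreover have "C (\<iota> c) = c \<cdot>\<^sub>m 1\<^sub>m e" for c
    by (rule cancel) (use p YY mult_smult_assoc_mat[OF one_carrier_mat p]
        mult_smult_distrib[OF p one_carrier_mat] in \<open>simp_all add: CY\<close>)
  ultimately show ?thesis unfolding is_rep_def using C by blast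
qed

lemma kernel_module_exists:
  fixes \<iota> :: "'k::field \<Rightarrow> 'a::{ring,monoid_mult}"
  assumes X: "X \<in> mods \<iota>" and Y: "Y \<in> mods \<iota>" and f: "is_hom X Y f"
  obtains K i where "K \<in> mods \<iota>" and "is_hom K X i" and "mono_mat i" and "exact_at i f"
proof -
  note fc = is_hom_carrier[OF f] and Xc = mods_carrier[OF X] and Yc = mods_carrier[OF Y]
  obtain d i where i: "i \<in> carrier_mat (rdim X) d" and mono: "mono_mat i" and exact: "exact_at i f"
    using kernel_mat_exists[OF fc] .
  have "\<exists>Z\<in>carrier_mat d d. X g * i = i * Z" for g
  proof (rule factor_through_kernel[OF fc i exact mult_carrier_mat[OF Xc i]])
    have "f * (X g * i) = Y g * (f * i)"
      using assoc_mult_mat[OF fc Xc i] assoc_mult_mat[OF Yc fc i] is_hom_commute[OF f] by simp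
    then show "f * (X g * i) = 0\<^sub>m (rdim Y) d" using exact_at_mult_zero[OF i fc exact] right_mult_zero_mat[OF Yc] by simp
  qed
  then obtain K where K: "\<And>g. K g \<in> carrier_mat d d" and XK: "\<And>g. X g * i = i * K g" by metis
  have rep: "is_rep \<iota> d K" by (rule is_rep_through_mono[OF mods_is_rep[OF X] i mono K XK])
  then have "is_hom K X i" unfolding is_hom_def using is_rep_rdim i XK by auto
  then show thesis using that is_rep_mods[OF rep] mono exact by blast
qed

lemma cokernel_module_exists:
  fixes \<iota> :: "'k::field \<Rightarrow> 'a::{ring,monoid_mult}"
  assumes X: "X \<in> mods \<iota>" and Y: "Y \<in> mods \<iota>" and f: "is_hom X Y f"
  obtains C p where "C \<in> mods \<iota>" and "is_hom Y C p" and "epi_mat p" and "exact_at f p"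
proof -
  note fc = is_hom_carrier[OF f] and Xc = mods_carrier[OF X] and Yc = mods_carrier[OF Y]
  obtain e p where p: "p \<in> carrier_mat e (rdim Y)" and epi: "epi_mat p" and exact: "exact_at f p"
    using cokernel_mat_exists[OF fc] .
  have "\<exists>Z\<in>carrier_mat e e. p * Y g = Z * p" for g
  proof (rule factor_through_cokernel[OF fc p epi exact mult_carrier_mat[OF p Yc]])
    have "(p * Y g) * f = (p * f) * X g"
      using assoc_mult_mat[OF p Yc fc] assoc_mult_mat[OF p fc Xc] is_hom_commute[OF f] by simp
    then show "(p * Y g) * f = 0\<^sub>m e (rdim X)" using exact_at_mult_zero[OF fc p exact] left_mult_zero_mat[OF Xc] by simp
  qed
  then obtain C where C: "\<And>g. C g \<in> carrier_mat e e" and YC: "\<And>g. p * Y g = C g * p" by metis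
  have rep: "is_rep \<iota> e C" by (rule is_rep_through_epi[OF mods_is_rep[OF Y] p epi C]) (simp add: YC)
  then have "is_hom Y C p" unfolding is_hom_def using is_rep_rdim p YC by auto
  then show thesis using that is_rep_mods[OF rep] epi exact by blast
qed

lemma is_hom_factor_mono:
  fixes \<iota> :: "'k::field \<Rightarrow> 'a::{ring,monoid_mult}"
  assumes W: "W \<in> mods \<iota>" and Z: "Z \<in> mods \<iota>" and Y: "Y \<in> mods \<iota>"
    and m: "is_hom Z Y m" and mo: "mono_mat m" and h: "is_hom W Y h"
    and s: "s \<in> carrier_mat (rdim Z) (rdim W)" and eq: "h = m * s"
  shows "is_hom W Z s"
proof -
  note mc = is_hom_carrier[OF m]
  note Wc = mods_carrier[OF W] and Zc = mods_carrier[OF Z] and Yc = mods_carrier[OF Y]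
  have "s * W g = Z g * s" for g
  proof (rule mono_mat_cancel_left[OF mo mc])
    show "s * W g \<in> carrier_mat (rdim Z) (rdim W)" using s Wc by (metis mult_carrier_mat)
    show "Z g * s \<in> carrier_mat (rdim Z) (rdim W)" using s Zc by (metis mult_carrier_mat)
    have "m * (s * W g) = (m * s) * W g" by (rule assoc_mult_mat[OF mc s Wc, symmetric])
    also have "\<dots> = h * W g" using eq by simp
    also have "\<dots> = Y g * h" using is_hom_commute[OF h] by simp
    also have "\<dots> = (Y g * m) * s" unfolding eq by (rule assoc_mult_mat[OF Yc mc s, symmetric])
    also have "Y g * m = m * Z g" using is_hom_commute[OF m] by simp
    also have "(m * Z g) * s = m * (Z g * s)" by (rule assoc_mult_mat[OF mc Zc s])
    finally show "m * (s * W g) = m * (Z g * s)" .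
  qed
  then show ?thesis unfolding is_hom_def using s by auto
qed

lemma is_hom_factor_epi:
  fixes \<iota> :: "'k::field \<Rightarrow> 'a::{ring,monoid_mult}"
  assumes W: "W \<in> mods \<iota>" and Z: "Z \<in> mods \<iota>" and Y: "Y \<in> mods \<iota>"
    and p: "is_hom Y Z p" and ep: "epi_mat p" and h: "is_hom Y W h"
    and s: "s \<in> carrier_mat (rdim W) (rdim Z)" and eq: "h = s * p"
  shows "is_hom Z W s"
proof -
  note pc = is_hom_carrier[OF p]
  note Wc = mods_carrier[OF W] and Zc = mods_carrier[OF Z] and Yc = mods_carrier[OF Y]
  have "s * Z g = W g * s" for g
  proof (rule epi_mat_cancel_right[OF ep pc])
    show "s * Z g \<in> carrier_mat (rdim W) (rdim Z)" using s Zc by (metis mult_carrier_mat)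
    show "W g * s \<in> carrier_mat (rdim W) (rdim Z)" using s Wc by (metis mult_carrier_mat)
    have "(s * Z g) * p = s * (Z g * p)" by (rule assoc_mult_mat[OF s Zc pc])
    also have "Z g * p = p * Y g" using is_hom_commute[OF p] by simp
    also have "s * (p * Y g) = (s * p) * Y g" by (rule assoc_mult_mat[OF s pc Yc, symmetric])
    also have "\<dots> = h * Y g" using eq by simp
    also have "\<dots> = W g * h" using is_hom_commute[OF h] by simp
    also have "\<dots> = (W g * s) * p" unfolding eq by (rule assoc_mult_mat[OF Wc s pc, symmetric])
    finally show "(s * Z g) * p = (W g * s) * p" .
  qed
  then show ?thesis unfolding is_hom_def using s by auto
qed

definition zero_rep :: "'a \<Rightarrow> 'k::field mat" where "zero_rep = (\<lambda>_. 1\<^sub>m 0)"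

lemma is_rep_zero_rep: "is_rep \<iota> 0 zero_rep"
  unfolding is_rep_def zero_rep_def by (auto intro: eq_matI)

lemma zero_rep_mods: "zero_rep \<in> mods \<iota>"
  using is_rep_zero_rep is_rep_mods by blast

lemma rdim_zero_rep: "rdim zero_rep = 0"
  unfolding rdim_def zero_rep_def by simp

lemma wide_subset_mods: "wide \<iota> W \<Longrightarrow> W \<subseteq> mods \<iota>"
  unfolding wide_def subcat_def by auto

text \<open>The zero module is the kernel of an identity map.\<close>
lemma wide_zero_rep:
  fixes \<iota> :: "'k::field \<Rightarrow> 'a::{ring,monoid_mult}"
  assumes W: "wide \<iota> S"
  shows "zero_rep \<in> S"
proof -
  obtain \<rho> where \<rho>: "\<rho> \<in> S" using W unfolding wide_def by auto
  then have \<rho>c: "\<rho> g \<in> carrier_mat (rdim \<rho>) (rdim \<rho>)" for g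
    using mods_carrier wide_subset_mods[OF W] by blast
  define i :: "'k mat" where "i = 0\<^sub>m (rdim \<rho>) 0"
  have "is_hom \<rho> \<rho> (1\<^sub>m (rdim \<rho>))" unfolding is_hom_def using \<rho>c by (metis left_mult_one_mat right_mult_one_mat one_carrier_mat)
  moreover have "is_hom zero_rep \<rho> i"
    unfolding is_hom_def rdim_zero_rep i_def using \<rho>c
    by (auto simp: zero_rep_def intro!: eq_matI) (metis carrier_matD(1))
  moreover have "mono_mat i" unfolding mono_mat_def i_def by (auto intro!: eq_vecI)
  moreover have "exact_at i (1\<^sub>m (rdim \<rho>))"
    by (rule exact_atI[OF one_carrier_mat])
      (auto simp: i_def scalar_prod_def intro!: eq_vecI bexI[of _ "0\<^sub>v 0"])
  ultimately show ?thesis using W \<rho> zero_rep_mods unfolding wide_def closed_kernels_def by blast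
qed

lemma wide_Inter:
  fixes \<iota> :: "'k::field \<Rightarrow> 'a::{ring,monoid_mult}"
  assumes F: "\<And>W. W \<in> F \<Longrightarrow> wide \<iota> W"
  shows "wide \<iota> (mods \<iota> \<inter> \<Inter>F)"
proof -
  let ?S = "mods \<iota> \<inter> \<Inter>F"
  have sc: "subcat \<iota> ?S" unfolding subcat_def
  proof (intro conjI ballI impI)
    fix \<rho> \<sigma> assume \<rho>: "\<rho> \<in> ?S" and \<sigma>: "\<sigma> \<in> mods \<iota>" and iso: "\<exists>G. is_iso \<rho> \<sigma> G"
    have "\<sigma> \<in> W" if "W \<in> F" for W using F[OF that] \<rho> \<sigma> iso that unfolding wide_def subcat_def by blast
    then show "\<sigma> \<in> ?S" using \<sigma> by blast
  qed auto
  have ne: "?S \<noteq> {}" using zero_rep_mods wide_zero_rep F by blast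
  have ck: "closed_kernels \<iota> ?S" unfolding closed_kernels_def
  proof (intro ballI allI impI)
    fix M N f K i assume "M \<in> ?S" "N \<in> ?S"
      "K \<in> mods \<iota> \<and> is_hom M N f \<and> is_hom K M i \<and> mono_mat i \<and> exact_at i f"
    then show "K \<in> ?S" using F unfolding wide_def closed_kernels_def by blast
  qed
  have cc: "closed_cokernels \<iota> ?S" unfolding closed_cokernels_def
  proof (intro ballI allI impI)
    fix M N f C p assume "M \<in> ?S" "N \<in> ?S"
      "C \<in> mods \<iota> \<and> is_hom M N f \<and> is_hom N C p \<and> epi_mat p \<and> exact_at f p"
    then show "C \<in> ?S" using F unfolding wide_def closed_cokernels_def by blast
  qed
  have ce: "closed_extensions \<iota> ?S" unfolding closed_extensions_def
  proof (intro ballI allI impI)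
    fix A C B f g assume "A \<in> ?S" "C \<in> ?S"
      "B \<in> mods \<iota> \<and> is_hom A B f \<and> is_hom B C g \<and> mono_mat f \<and> epi_mat g \<and> exact_at f g"
    then show "B \<in> ?S" using F unfolding wide_def closed_extensions_def by blast
  qed
  show ?thesis unfolding wide_def using sc ne ck cc ce by blast
qed

lemma wide_Int:
  fixes \<iota> :: "'k::field \<Rightarrow> 'a::{ring,monoid_mult}"
  assumes "wide \<iota> x" "wide \<iota> y" shows "wide \<iota> (x \<inter> y)"
proof -
  have "wide \<iota> (mods \<iota> \<inter> \<Inter>{x, y})" using assms by (intro wide_Inter) auto
  moreover have "mods \<iota> \<inter> \<Inter>{x, y} = x \<inter> y" using wide_subset_mods[OF assms(1)] by auto
  ultimately show ?thesis by simp
qed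

section \<open>Restriction along an algebra epimorphism\<close>

lemma res_mod_Int: "res_mod \<phi> \<iota> (x \<inter> y) = res_mod \<phi> \<iota> x \<inter> res_mod \<phi> \<iota> y"
  unfolding res_mod_def by auto

locale algebra_epi =
  fixes \<iota>G :: "'k::field \<Rightarrow> 'g::{ring,monoid_mult}"
    and \<iota>L :: "'k \<Rightarrow> 'l::{ring,monoid_mult}"
    and \<phi> :: "'g \<Rightarrow> 'l"
  assumes epi: "alg_epi \<iota>G \<iota>L \<phi>"
begin

lemma phi_simps: "\<phi> (a + b) = \<phi> a + \<phi> b" "\<phi> (a * b) = \<phi> a * \<phi> b" "\<phi> 1 = 1" "\<phi> (\<iota>G c) = \<iota>L c"
  using epi unfolding alg_epi_def by auto

lemma phi_surj: "surj \<phi>"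
  using epi unfolding alg_epi_def by auto

lemma is_rep_pullback: "is_rep \<iota>L n \<sigma> \<Longrightarrow> is_rep \<iota>G n (\<sigma> \<circ> \<phi>)"
  unfolding is_rep_def by (simp add: phi_simps)

lemma mods_pullback: "\<sigma> \<in> mods \<iota>L \<Longrightarrow> \<sigma> \<circ> \<phi> \<in> mods \<iota>G"
  unfolding mods_def using is_rep_pullback by blast

lemma rdim_pullback: "rdim (\<sigma> \<circ> \<phi>) = rdim \<sigma>"
  unfolding rdim_def by (simp add: phi_simps)

lemma is_hom_pullback_iff: "is_hom (\<sigma> \<circ> \<phi>) (\<tau> \<circ> \<phi>) F \<longleftrightarrow> is_hom \<sigma> \<tau> F"
proof -
  have "(\<forall>g. F * \<sigma> (\<phi> g) = \<tau> (\<phi> g) * F) \<longleftrightarrow> (\<forall>l. F * \<sigma> l = \<tau> l * F)"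
    using phi_surj by (metis surjD)
  then show ?thesis unfolding is_hom_def rdim_pullback by simp
qed

lemma is_iso_pullback_iff: "is_iso (\<sigma> \<circ> \<phi>) (\<tau> \<circ> \<phi>) F \<longleftrightarrow> is_iso \<sigma> \<tau> F"
  unfolding is_iso_def is_hom_pullback_iff rdim_pullback by simp

lemma zero_rep_pullback: "zero_rep \<circ> \<phi> = zero_rep"
  unfolding zero_rep_def by auto

text \<open>The modules of \<open>\<Gamma>\<close> coming from \<open>\<Lambda>\<close> are those on which \<open>ker \<phi>\<close> acts trivially.\<close>
definition factors_through :: "('g \<Rightarrow> 'k mat) \<Rightarrow> bool" where
  "factors_through \<rho> \<longleftrightarrow> (\<forall>g g'. \<phi> g = \<phi> g' \<longrightarrow> \<rho> g = \<rho> g')"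

lemma factors_through_pullback: "factors_through (\<sigma> \<circ> \<phi>)"
  unfolding factors_through_def by simp

lemma mods_descend:
  assumes \<rho>: "\<rho> \<in> mods \<iota>G" and fa: "factors_through \<rho>"
  obtains \<sigma> where "\<sigma> \<in> mods \<iota>L" and "\<rho> = \<sigma> \<circ> \<phi>"
proof -
  define \<sigma> where "\<sigma> = \<rho> \<circ> inv_into UNIV \<phi>"
  have \<sigma>\<phi>: "\<sigma> (\<phi> g) = \<rho> g" for g
    using fa surj_f_inv_f[OF phi_surj, of "\<phi> g"] unfolding \<sigma>_def factors_through_def comp_def by blast
  then have eq: "\<rho> = \<sigma> \<circ> \<phi>" by auto
  have pre: "\<exists>g. l = \<phi> g" for l using phi_surj by auto
  note R = mods_is_rep[OF \<rho>, unfolded is_rep_def]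
  have "is_rep \<iota>L (rdim \<rho>) \<sigma>" unfolding is_rep_def
  proof (intro conjI allI)
    fix l show "\<sigma> l \<in> carrier_mat (rdim \<rho>) (rdim \<rho>)" using pre[of l] \<sigma>\<phi> R by auto
  next
    fix a b
    obtain ga gb where "a = \<phi> ga" "b = \<phi> gb" using pre by metis
    then show "\<sigma> (a + b) = \<sigma> a + \<sigma> b" "\<sigma> (a * b) = \<sigma> a * \<sigma> b"
      using R by (simp_all add: \<sigma>\<phi> flip: phi_simps(1,2))
  qed (use R \<sigma>\<phi>[of 1] \<sigma>\<phi>[of "\<iota>G _"] in \<open>simp_all add: phi_simps(3,4)\<close>)
  then show thesis using that eq is_rep_mods by blast
qed

lemma factors_through_submodule:
  assumes i: "is_hom K X i" and K: "K \<in> mods \<iota>G" and mono: "mono_mat i" and X: "factors_through X"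
  shows "factors_through K"
  unfolding factors_through_def
proof (intro allI impI)
  fix g g' assume "\<phi> g = \<phi> g'"
  then have "i * K g = i * K g'" using X is_hom_commute[OF i] unfolding factors_through_def by metis
  then show "K g = K g'" using mono_mat_cancel_left[OF mono is_hom_carrier[OF i]] mods_carrier[OF K] by blast
qed

lemma factors_through_quotient:
  assumes p: "is_hom X C p" and C: "C \<in> mods \<iota>G" and epi: "epi_mat p" and X: "factors_through X"
  shows "factors_through C"
  unfolding factors_through_def
proof (intro allI impI)
  fix g g' assume "\<phi> g = \<phi> g'"
  then have "C g * p = C g' * p" using X is_hom_commute[OF p] unfolding factors_through_def by metis
  then show "C g = C g'" using epi_mat_cancel_right[OF epi is_hom_carrier[OF p]] mods_carrier[OF C] by blast
qed


lemma wide_res_mod: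
  assumes W: "wide \<iota>G W"
  shows "wide \<iota>L (res_mod \<phi> \<iota>L W)"
proof -
  let ?S = "res_mod \<phi> \<iota>L W"
  have pullback: "\<sigma> \<in> ?S \<longleftrightarrow> \<sigma> \<in> mods \<iota>L \<and> \<sigma> \<circ> \<phi> \<in> W" for \<sigma> unfolding res_mod_def by simp
  note W' = W[unfolded wide_def]
  have "subcat \<iota>L ?S" unfolding subcat_def
  proof (intro conjI ballI impI)
    show "?S \<subseteq> mods \<iota>L" using pullback by blast
  next
    fix \<rho> \<sigma> assume "\<rho> \<in> ?S" and \<sigma>: "\<sigma> \<in> mods \<iota>L" and "\<exists>F. is_iso \<rho> \<sigma> F"
    then show "\<sigma> \<in> ?S"
      using pullback W' mods_pullback[OF \<sigma>] is_iso_pullback_iff unfolding subcat_def by blast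
  qed
  moreover have "zero_rep \<in> ?S"
    unfolding pullback zero_rep_pullback using zero_rep_mods wide_zero_rep[OF W] by blast
  moreover have "closed_kernels \<iota>L ?S" unfolding closed_kernels_def
  proof (intro ballI allI impI)
    fix X Y f K i assume "X \<in> ?S" "Y \<in> ?S"
      "K \<in> mods \<iota>L \<and> is_hom X Y f \<and> is_hom K X i \<and> mono_mat i \<and> exact_at i f"
    then show "K \<in> ?S"
      using pullback W' mods_pullback[of K] is_hom_pullback_iff[of X Y f] is_hom_pullback_iff[of K X i]
      unfolding closed_kernels_def by blast
  qed
  moreover have "closed_cokernels \<iota>L ?S" unfolding closed_cokernels_def
  proof (intro ballI allI impI)
    fix X Y f C p assume "X \<in> ?S" "Y \<in> ?S"
      "C \<in> mods \<iota>L \<and> is_hom X Y f \<and> is_hom Y C p \<and> epi_mat p \<and> exact_at f p"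
    then show "C \<in> ?S"
      using pullback W' mods_pullback[of C] is_hom_pullback_iff[of X Y f] is_hom_pullback_iff[of Y C p]
      unfolding closed_cokernels_def by blast
  qed
  moreover have "closed_extensions \<iota>L ?S" unfolding closed_extensions_def
  proof (intro ballI allI impI)
    fix A C B a b assume "A \<in> ?S" "C \<in> ?S"
      "B \<in> mods \<iota>L \<and> is_hom A B a \<and> is_hom B C b \<and> mono_mat a \<and> epi_mat b \<and> exact_at a b"
    then show "B \<in> ?S"
      using pullback W' mods_pullback[of B] is_hom_pullback_iff[of A B a] is_hom_pullback_iff[of B C b]
      unfolding closed_extensions_def by blast
  qed
  ultimately show ?thesis unfolding wide_def by blast
qed

end

section \<open>Modules filtered by a wide subcategory of \<open>mod(\<Lambda>)\<close>\<close>

locale filtration = algebra_epi \<iota>G \<iota>L \<phi>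
  for \<iota>G :: "'k::field \<Rightarrow> 'g::{ring,monoid_mult}"
    and \<iota>L :: "'k \<Rightarrow> 'l::{ring,monoid_mult}"
    and \<phi> :: "'g \<Rightarrow> 'l" +
  fixes V :: "('l \<Rightarrow> 'k mat) set"
  assumes V: "wide \<iota>L V"
begin

inductive filt :: "('g \<Rightarrow> 'k mat) \<Rightarrow> bool" where
  base: "\<xi> \<in> V \<Longrightarrow> filt (\<xi> \<circ> \<phi>)"
| ext: "filt A \<Longrightarrow> filt C \<Longrightarrow> B \<in> mods \<iota>G \<Longrightarrow> is_hom A B a \<Longrightarrow> is_hom B C b \<Longrightarrow>
    mono_mat a \<Longrightarrow> epi_mat b \<Longrightarrow> exact_at a b \<Longrightarrow> filt B"

lemma filt_mods: "filt X \<Longrightarrow> X \<in> mods \<iota>G"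
  by (induction rule: filt.induct) (use wide_subset_mods[OF V] mods_pullback in blast)+

lemma filt_zero_rep: "filt zero_rep"
  by (subst zero_rep_pullback[symmetric]) (rule filt.base[OF wide_zero_rep[OF V]])

text \<open>An isomorphism \<open>F : X \<rightarrow> Y\<close> is an extension of the zero module by \<open>X\<close>.\<close>
lemma filt_iso:
  assumes X: "filt X" and Y: "Y \<in> mods \<iota>G" and iso: "is_iso X Y F"
  shows "filt Y"
proof -
  obtain G where F: "is_hom X Y F" and "is_hom Y X G"
    and GF: "G * F = 1\<^sub>m (rdim X)" and FG: "F * G = 1\<^sub>m (rdim Y)"
    using iso unfolding is_iso_def by blast
  note Fc = is_hom_carrier[OF F] and Gc = is_hom_carrier[OF \<open>is_hom Y X G\<close>]
  have "mono_mat F"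
  proof (rule mono_matI[OF Fc])
    fix v :: "'k vec" assume v: "v \<in> carrier_vec (rdim X)" and "F *\<^sub>v v = 0\<^sub>v (rdim Y)"
    then have "(G * F) *\<^sub>v v = 0\<^sub>v (rdim X)" using Fc Gc mult_mat_vec_zero[OF Gc] by simp
    then show "v = 0\<^sub>v (rdim X)" using GF v by simp
  qed
  have epi: "epi_mat F"
  proof (rule epi_matI[OF Fc])
    fix w :: "'k vec" assume w: "w \<in> carrier_vec (rdim Y)"
    then have "F *\<^sub>v (G *\<^sub>v w) = w" using Fc Gc FG by (simp flip: assoc_mult_mat_vec)
    then show "\<exists>v\<in>carrier_vec (rdim X). F *\<^sub>v v = w" using Gc w by (intro bexI[of _ "G *\<^sub>v w"]) auto
  qed
  define z :: "'k mat" where "z = 0\<^sub>m 0 (rdim Y)"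
  have "is_hom Y zero_rep z"
    unfolding is_hom_def z_def rdim_zero_rep using mods_carrier[OF Y]
    by (auto simp: zero_rep_def intro!: eq_matI) (metis carrier_matD(2))
  moreover have "epi_mat z" unfolding z_def
    by (rule epi_matI[of _ 0 "rdim Y"]) (auto intro!: bexI[of _ "0\<^sub>v (rdim Y)"] eq_vecI)
  moreover have "exact_at F z"
    using epi_matD[OF epi Fc] Fc unfolding exact_at_def z_def by (auto intro!: eq_vecI)
  ultimately show ?thesis using filt.ext[OF X filt_zero_rep Y F] \<open>mono_mat F\<close> by blast
qed

lemma filt_descends:
  assumes "filt X" and "factors_through X"
  shows "\<exists>\<xi>\<in>V. X = \<xi> \<circ> \<phi>"
  using assms
proof (induction rule: filt.induct)
  case (base \<xi>)
  then show ?case by blast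
next
  case (ext A C B a b)
  have A: "A \<in> mods \<iota>G" and C: "C \<in> mods \<iota>G" using filt_mods ext.hyps(1,2) by auto
  obtain \<alpha> where \<alpha>: "\<alpha> \<in> V" "A = \<alpha> \<circ> \<phi>"
    using ext.IH(1) factors_through_submodule[OF ext.hyps(4) A ext.hyps(6) ext.prems] by blast
  obtain \<gamma> where \<gamma>: "\<gamma> \<in> V" "C = \<gamma> \<circ> \<phi>"
    using ext.IH(2) factors_through_quotient[OF ext.hyps(5) C ext.hyps(7) ext.prems] by blast
  obtain \<beta> where \<beta>: "\<beta> \<in> mods \<iota>L" "B = \<beta> \<circ> \<phi>" using mods_descend[OF ext.hyps(3) ext.prems] .
  have "is_hom \<alpha> \<beta> a" "is_hom \<beta> \<gamma> b"
    using ext.hyps(4,5) unfolding \<alpha>(2) \<beta>(2) \<gamma>(2) is_hom_pullback_iff .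
  then have "\<beta> \<in> V"
    using V \<alpha>(1) \<gamma>(1) \<beta>(1) ext.hyps(6-8) unfolding wide_def closed_extensions_def by blast
  then show ?case using \<beta>(2) by blast
qed

lemma filt_pullback_iff: "filt (\<sigma> \<circ> \<phi>) \<longleftrightarrow> \<sigma> \<in> V"
proof
  assume "filt (\<sigma> \<circ> \<phi>)"
  then obtain \<xi> where \<xi>: "\<xi> \<in> V" and eq: "\<sigma> \<circ> \<phi> = \<xi> \<circ> \<phi>"
    using filt_descends factors_through_pullback by blast
  have "\<sigma> = \<xi>"
  proof
    fix l
    obtain g where "l = \<phi> g" using phi_surj by auto
    then show "\<sigma> l = \<xi> l" using arg_cong[OF eq, of "\<lambda>h. h g"] by simp
  qed
  then show "\<sigma> \<in> V" using \<xi> by simp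
qed (rule filt.base)

definition filt_kernels :: "('g \<Rightarrow> 'k mat) \<Rightarrow> 'k mat \<Rightarrow> bool" where
  "filt_kernels X f \<longleftrightarrow>
     (\<forall>K i. K \<in> mods \<iota>G \<longrightarrow> is_hom K X i \<longrightarrow> mono_mat i \<longrightarrow> exact_at i f \<longrightarrow> filt K)"

definition filt_cokernels :: "('g \<Rightarrow> 'k mat) \<Rightarrow> 'k mat \<Rightarrow> bool" where
  "filt_cokernels Y f \<longleftrightarrow>
     (\<forall>C p. C \<in> mods \<iota>G \<longrightarrow> is_hom Y C p \<longrightarrow> epi_mat p \<longrightarrow> exact_at f p \<longrightarrow> filt C)"

lemma filt_kernels_pullback:
  assumes \<xi>: "\<xi> \<in> V" and \<eta>: "\<eta> \<in> V" and f: "is_hom (\<xi> \<circ> \<phi>) (\<eta> \<circ> \<phi>) f"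
  shows "filt_kernels (\<xi> \<circ> \<phi>) f"
  unfolding filt_kernels_def
proof (intro allI impI)
  fix K i assume K: "K \<in> mods \<iota>G" and i: "is_hom K (\<xi> \<circ> \<phi>) i" and "mono_mat i" "exact_at i f"
  obtain \<kappa> where \<kappa>: "\<kappa> \<in> mods \<iota>L" "K = \<kappa> \<circ> \<phi>"
    using mods_descend[OF K factors_through_submodule[OF i K \<open>mono_mat i\<close> factors_through_pullback]] .
  have "is_hom \<kappa> \<xi> i" "is_hom \<xi> \<eta> f" using i f unfolding \<kappa>(2) is_hom_pullback_iff .
  then have "\<kappa> \<in> V"
    using V \<xi> \<eta> \<kappa>(1) \<open>mono_mat i\<close> \<open>exact_at i f\<close> unfolding wide_def closed_kernels_def by blast
  then show "filt K" unfolding \<kappa>(2) by (rule filt.base)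
qed

lemma filt_cokernels_pullback:
  assumes \<xi>: "\<xi> \<in> V" and \<eta>: "\<eta> \<in> V" and f: "is_hom (\<xi> \<circ> \<phi>) (\<eta> \<circ> \<phi>) f"
  shows "filt_cokernels (\<eta> \<circ> \<phi>) f"
  unfolding filt_cokernels_def
proof (intro allI impI)
  fix C p assume C: "C \<in> mods \<iota>G" and p: "is_hom (\<eta> \<circ> \<phi>) C p" and "epi_mat p" "exact_at f p"
  obtain \<kappa> where \<kappa>: "\<kappa> \<in> mods \<iota>L" "C = \<kappa> \<circ> \<phi>"
    using mods_descend[OF C factors_through_quotient[OF p C \<open>epi_mat p\<close> factors_through_pullback]] .
  have "is_hom \<eta> \<kappa> p" "is_hom \<xi> \<eta> f" using p f unfolding \<kappa>(2) is_hom_pullback_iff .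
  then have "\<kappa> \<in> V"
    using V \<xi> \<eta> \<kappa>(1) \<open>epi_mat p\<close> \<open>exact_at f p\<close> unfolding wide_def closed_cokernels_def by blast
  then show "filt C" unfolding \<kappa>(2) by (rule filt.base)
qed

lemma filt_kernels_domain_ext:
  assumes X1: "X1 \<in> mods \<iota>G" and X: "X \<in> mods \<iota>G" and X2: "X2 \<in> mods \<iota>G"
    and Y: "Y \<in> mods \<iota>G" and C1: "C1 \<in> mods \<iota>G"
    and a: "is_hom X1 X a" and b: "is_hom X X2 b"
    and ses: "mono_mat a" "epi_mat b" "exact_at a b"
    and f: "is_hom X Y f" and q: "is_hom Y C1 q" and exact_q: "exact_at (f * a) q"
    and f2: "is_hom X2 C1 f2" and qf: "q * f = f2 * b"
    and ker1: "filt_kernels X1 (f * a)" and ker2: "filt_kernels X2 f2"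
  shows "filt_kernels X f"
  unfolding filt_kernels_def
proof (intro allI impI)
  fix K i assume K: "K \<in> mods \<iota>G" and i: "is_hom K X i" and "mono_mat i" and exact_i: "exact_at i f"
  note ac = is_hom_carrier[OF a] and bc = is_hom_carrier[OF b] and fc = is_hom_carrier[OF f]
    and qc = is_hom_carrier[OF q] and f2c = is_hom_carrier[OF f2] and ic = is_hom_carrier[OF i]
  obtain K1 i1 where K1: "K1 \<in> mods \<iota>G" and i1: "is_hom K1 X1 i1" and "mono_mat i1"
    and exact_i1: "exact_at i1 (f * a)"
    using kernel_module_exists[OF X1 Y is_hom_mult[OF X1 X Y a f]] by blast
  obtain K2 i2 where K2: "K2 \<in> mods \<iota>G" and i2: "is_hom K2 X2 i2" and "mono_mat i2"
    and exact_i2: "exact_at i2 f2"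
    using kernel_module_exists[OF X2 C1 f2] by blast
  note i1c = is_hom_carrier[OF i1] and i2c = is_hom_carrier[OF i2]
  have "f * (a * i1) = 0\<^sub>m (rdim Y) (rdim K1)"
    using exact_at_mult_zero[OF i1c _ exact_i1] assoc_mult_mat[OF fc ac i1c] fc ac by simp
  then obtain s where s: "s \<in> carrier_mat (rdim K) (rdim K1)" and s_eq: "a * i1 = i * s"
    using factor_through_kernel[OF fc ic exact_i mult_carrier_mat[OF ac i1c]] by blast
  have "f2 * (b * i) = q * (f * i)"
    using assoc_mult_mat[OF f2c bc ic] assoc_mult_mat[OF qc fc ic] qf by simp
  then have "f2 * (b * i) = 0\<^sub>m (rdim C1) (rdim K)" using exact_at_mult_zero[OF ic fc exact_i] qc by simp
  then obtain t where t: "t \<in> carrier_mat (rdim K2) (rdim K)" and t_eq: "b * i = i2 * t"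
    using factor_through_kernel[OF f2c i2c exact_i2 mult_carrier_mat[OF bc ic]] by blast
  interpret snake: kernel_snake a b f q f2 i1 i i2 s t
    "rdim X1" "rdim X" "rdim X2" "rdim Y" "rdim C1" "rdim K1" "rdim K" "rdim K2"
    using ac bc fc qc f2c i1c ic i2c s t ses exact_q qf \<open>mono_mat i1\<close> exact_i1 \<open>mono_mat i\<close> exact_i
      \<open>mono_mat i2\<close> exact_i2 s_eq t_eq by unfold_locales
  have "is_hom K1 K s" by (rule is_hom_factor_mono[OF K1 K X i \<open>mono_mat i\<close> is_hom_mult[OF K1 X1 X i1 a] s s_eq])
  moreover have "is_hom K K2 t"
    by (rule is_hom_factor_mono[OF K K2 X2 i2 \<open>mono_mat i2\<close> is_hom_mult[OF K X X2 i b] t t_eq])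
  moreover have "filt K1" "filt K2"
    using ker1 ker2 K1 K2 i1 i2 \<open>mono_mat i1\<close> \<open>mono_mat i2\<close> exact_i1 exact_i2
    unfolding filt_kernels_def by blast+
  ultimately show "filt K" using filt.ext K snake.mono_s snake.epi_t snake.exact_s_t by blast
qed

lemma filt_cokernels_domain_ext:
  assumes Y: "Y \<in> mods \<iota>G" and C1: "C1 \<in> mods \<iota>G"
    and a: "a \<in> carrier_mat (rdim X) n1" and b: "b \<in> carrier_mat (rdim X2) (rdim X)" and "epi_mat b"
    and f: "is_hom X Y f" and q: "is_hom Y C1 q" and "epi_mat q" and exact_q: "exact_at (f * a) q"
    and f2: "is_hom X2 C1 f2" and qf: "q * f = f2 * b"
    and coker2: "filt_cokernels C1 f2"
  shows "filt_cokernels Y f"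
  unfolding filt_cokernels_def
proof (intro allI impI)
  fix C p assume C: "C \<in> mods \<iota>G" and p: "is_hom Y C p" and "epi_mat p" and exact_p: "exact_at f p"
  note fc = is_hom_carrier[OF f] and qc = is_hom_carrier[OF q] and pc = is_hom_carrier[OF p]
  have "p * (f * a) = 0\<^sub>m (rdim C) n1"
    using assoc_mult_mat[OF pc fc a] exact_at_mult_zero[OF fc pc exact_p] a by simp
  then obtain p2 where p2: "p2 \<in> carrier_mat (rdim C) (rdim C1)" and p_eq: "p = p2 * q"
    using factor_through_cokernel[OF mult_carrier_mat[OF fc a] qc \<open>epi_mat q\<close> exact_q pc] by blast
  have "is_hom C1 C p2" by (rule is_hom_factor_epi[OF C C1 Y q \<open>epi_mat q\<close> p p2 p_eq])
  moreover have "epi_mat p2" using epi_mat_mult_left[OF p2 qc] \<open>epi_mat p\<close> p_eq by simp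
  moreover have "exact_at f2 p2"
    using exact_at_cancel_epis[OF b \<open>epi_mat b\<close> fc qc \<open>epi_mat q\<close> is_hom_carrier[OF f2] qf p2]
      exact_p p_eq by simp
  ultimately show "filt C" using coker2 C unfolding filt_cokernels_def by blast
qed

lemma filt_kernels_codomain_ext:
  assumes X: "X \<in> mods \<iota>G" and K: "K \<in> mods \<iota>G"
    and c: "c \<in> carrier_mat (rdim Y) m1" and "mono_mat c" and d: "d \<in> carrier_mat m2 (rdim Y)"
    and f: "is_hom X Y f" and k: "is_hom K X k" and "mono_mat k" and exact_k: "exact_at k (d * f)"
    and g: "g \<in> carrier_mat m1 (rdim K)" and fk: "f * k = c * g"
    and ker: "filt_kernels K g"
  shows "filt_kernels X f"
  unfolding filt_kernels_def
proof (intro allI impI)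
  fix Kf i assume Kf: "Kf \<in> mods \<iota>G" and i: "is_hom Kf X i" and "mono_mat i" and exact_i: "exact_at i f"
  note fc = is_hom_carrier[OF f] and kc = is_hom_carrier[OF k] and ic = is_hom_carrier[OF i]
  have "(d * f) * i = 0\<^sub>m m2 (rdim Kf)"
    using assoc_mult_mat[OF d fc ic] exact_at_mult_zero[OF ic fc exact_i] d by simp
  then obtain i' where i': "i' \<in> carrier_mat (rdim K) (rdim Kf)" and i_eq: "i = k * i'"
    using factor_through_kernel[OF mult_carrier_mat[OF d fc] kc exact_k ic] by blast
  have "is_hom Kf K i'" by (rule is_hom_factor_mono[OF Kf K X k \<open>mono_mat k\<close> i i' i_eq])
  moreover have "mono_mat i'" using mono_mat_mult_right[OF kc i'] \<open>mono_mat i\<close> i_eq by simp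
  moreover have "exact_at i' g"
    using exact_at_cancel_monos[OF c \<open>mono_mat c\<close> fc kc \<open>mono_mat k\<close> g fk i'] exact_i i_eq by simp
  ultimately show "filt Kf" using ker Kf unfolding filt_kernels_def by blast
qed

lemma filt_cokernels_codomain_ext:
  assumes X: "X \<in> mods \<iota>G" and K: "K \<in> mods \<iota>G"
    and Y1: "Y1 \<in> mods \<iota>G" and Y: "Y \<in> mods \<iota>G" and Y2: "Y2 \<in> mods \<iota>G"
    and c: "is_hom Y1 Y c" and d: "is_hom Y Y2 d"
    and ses: "mono_mat c" "epi_mat d" "exact_at c d"
    and f: "is_hom X Y f" and k: "k \<in> carrier_mat (rdim X) (rdim K)" and exact_k: "exact_at k (d * f)"
    and g: "is_hom K Y1 g" and fk: "f * k = c * g"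
    and coker1: "filt_cokernels Y1 g" and coker2: "filt_cokernels Y2 (d * f)"
  shows "filt_cokernels Y f"
  unfolding filt_cokernels_def
proof (intro allI impI)
  fix C p assume C: "C \<in> mods \<iota>G" and p: "is_hom Y C p" and "epi_mat p" and exact_p: "exact_at f p"
  note cc = is_hom_carrier[OF c] and dc = is_hom_carrier[OF d] and fc = is_hom_carrier[OF f]
    and gc = is_hom_carrier[OF g] and pc = is_hom_carrier[OF p]
  obtain C1 p1 where C1: "C1 \<in> mods \<iota>G" and p1: "is_hom Y1 C1 p1" and "epi_mat p1"
    and exact_p1: "exact_at g p1"
    using cokernel_module_exists[OF K Y1 g] by blast
  obtain C2 p2 where C2: "C2 \<in> mods \<iota>G" and p2: "is_hom Y2 C2 p2" and "epi_mat p2"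
    and exact_p2: "exact_at (d * f) p2"
    using cokernel_module_exists[OF X Y2 is_hom_mult[OF X Y Y2 f d]] by blast
  note p1c = is_hom_carrier[OF p1] and p2c = is_hom_carrier[OF p2]
  have "(p * c) * g = (p * f) * k"
    using assoc_mult_mat[OF pc cc gc] assoc_mult_mat[OF pc fc k] fk by simp
  then have "(p * c) * g = 0\<^sub>m (rdim C) (rdim K)" using exact_at_mult_zero[OF fc pc exact_p] k by simp
  then obtain s where s: "s \<in> carrier_mat (rdim C) (rdim C1)" and s_eq: "p * c = s * p1"
    using factor_through_cokernel[OF gc p1c \<open>epi_mat p1\<close> exact_p1 mult_carrier_mat[OF pc cc]] by blast
  have "(p2 * d) * f = 0\<^sub>m (rdim C2) (rdim X)"
    using assoc_mult_mat[OF p2c dc fc] exact_at_mult_zero[OF mult_carrier_mat[OF dc fc] p2c exact_p2] by simp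
  then obtain t where t: "t \<in> carrier_mat (rdim C2) (rdim C)" and t_eq: "p2 * d = t * p"
    using factor_through_cokernel[OF fc pc \<open>epi_mat p\<close> exact_p mult_carrier_mat[OF p2c dc]] by blast
  interpret snake: cokernel_snake c d f k g p1 p p2 s t
    "rdim Y1" "rdim Y" "rdim Y2" "rdim X" "rdim K" "rdim C1" "rdim C" "rdim C2"
    using cc dc fc k gc p1c pc p2c s t ses exact_k fk \<open>epi_mat p1\<close> exact_p1 \<open>epi_mat p\<close> exact_p
      \<open>epi_mat p2\<close> exact_p2 s_eq t_eq by unfold_locales
  have "is_hom C1 C s" by (rule is_hom_factor_epi[OF C C1 Y1 p1 \<open>epi_mat p1\<close> is_hom_mult[OF Y1 Y C c p] s s_eq])
  moreover have "is_hom C C2 t"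
    by (rule is_hom_factor_epi[OF C2 C Y p \<open>epi_mat p\<close> is_hom_mult[OF Y Y2 C2 d p2] t t_eq])
  moreover have "filt C1" "filt C2"
    using coker1 coker2 C1 C2 p1 p2 \<open>epi_mat p1\<close> \<open>epi_mat p2\<close> exact_p1 exact_p2
    unfolding filt_cokernels_def by blast+
  ultimately show "filt C" using filt.ext C snake.mono_s snake.epi_t snake.exact_s_t by blast
qed

lemma filt_kernels_cokernels_from_pullback:
  assumes "filt Y" and "\<xi> \<in> V" and "is_hom (\<xi> \<circ> \<phi>) Y f"
  shows "filt_kernels (\<xi> \<circ> \<phi>) f \<and> filt_cokernels Y f"
  using assms
proof (induction Y arbitrary: \<xi> f rule: filt.induct)
  case (base \<eta>)
  then show ?case using filt_kernels_pullback filt_cokernels_pullback by blast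
next
  case (ext Y1 Y2 Y c d)
  let ?X = "\<xi> \<circ> \<phi>"
  have X: "?X \<in> mods \<iota>G" and Y1: "Y1 \<in> mods \<iota>G" and Y2: "Y2 \<in> mods \<iota>G"
    using filt_mods filt.base ext by blast+
  note f = ext.prems(2)
  have df: "is_hom ?X Y2 (d * f)" using is_hom_mult[OF X ext.hyps(3) Y2 f ext.hyps(5)] .
  obtain K k where K: "K \<in> mods \<iota>G" and k: "is_hom K ?X k" and "mono_mat k" and exact_k: "exact_at k (d * f)"
    using kernel_module_exists[OF X Y2 df] by blast
  have IH2: "filt_kernels ?X (d * f)" "filt_cokernels Y2 (d * f)" using ext.IH(2)[OF ext.prems(1) df] by blast+
  then have "filt K" using K k \<open>mono_mat k\<close> exact_k unfolding filt_kernels_def by blast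
  \<comment> \<open>as a submodule of a \<open>\<Lambda>\<close>-module, the kernel of \<open>d * f\<close> again comes from \<open>V\<close>\<close>
  then obtain \<kappa> where "\<kappa> \<in> V" and \<kappa>: "K = \<kappa> \<circ> \<phi>"
    using filt_descends factors_through_submodule[OF k K \<open>mono_mat k\<close> factors_through_pullback] by blast
  note cc = is_hom_carrier[OF ext.hyps(4)] and dc = is_hom_carrier[OF ext.hyps(5)]
    and fc = is_hom_carrier[OF f] and kc = is_hom_carrier[OF k]
  have "d * (f * k) = 0\<^sub>m (rdim Y2) (rdim K)"
    using assoc_mult_mat[OF dc fc kc] exact_at_mult_zero[OF kc mult_carrier_mat[OF dc fc] exact_k] by simp
  then obtain g where g: "g \<in> carrier_mat (rdim Y1) (rdim K)" and fk: "f * k = c * g"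
    using factor_through_kernel[OF dc cc ext.hyps(8) mult_carrier_mat[OF fc kc]] by blast
  have gh: "is_hom K Y1 g"
    by (rule is_hom_factor_mono[OF K Y1 ext.hyps(3) ext.hyps(4,6) is_hom_mult[OF K X ext.hyps(3) k f] g fk])
  have IH1: "filt_kernels K g" "filt_cokernels Y1 g" using ext.IH(1)[OF \<open>\<kappa> \<in> V\<close>] gh unfolding \<kappa> by blast+
  show ?case
    using filt_kernels_codomain_ext[OF X K cc ext.hyps(6) dc f k \<open>mono_mat k\<close> exact_k g fk IH1(1)]
      filt_cokernels_codomain_ext[OF X K Y1 ext.hyps(3) Y2 ext.hyps(4,5,6,7,8) f kc exact_k gh fk
        IH1(2) IH2(2)]
    by blast
qed

lemma filt_kernels_cokernels:
  assumes "filt X" and "filt Y" and "is_hom X Y f"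
  shows "filt_kernels X f \<and> filt_cokernels Y f"
  using assms
proof (induction X arbitrary: Y f rule: filt.induct)
  case (base \<xi>)
  then show ?case using filt_kernels_cokernels_from_pullback by blast
next
  case (ext X1 X2 X a b)
  have X1: "X1 \<in> mods \<iota>G" and X2: "X2 \<in> mods \<iota>G" and Y: "Y \<in> mods \<iota>G"
    using filt_mods ext by blast+
  note f = ext.prems(2)
  have fa: "is_hom X1 Y (f * a)" using is_hom_mult[OF X1 ext.hyps(3) Y ext.hyps(4) f] .
  obtain C1 q where C1: "C1 \<in> mods \<iota>G" and q: "is_hom Y C1 q" and "epi_mat q" and exact_q: "exact_at (f * a) q"
    using cokernel_module_exists[OF X1 Y fa] by blast
  have IH1: "filt_kernels X1 (f * a)" "filt_cokernels Y (f * a)" using ext.IH(1)[OF ext.prems(1) fa] by auto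
  then have "filt C1" using C1 q \<open>epi_mat q\<close> exact_q unfolding filt_cokernels_def by blast
  note ac = is_hom_carrier[OF ext.hyps(4)] and bc = is_hom_carrier[OF ext.hyps(5)]
    and fc = is_hom_carrier[OF f] and qc = is_hom_carrier[OF q]
  have "(q * f) * a = 0\<^sub>m (rdim C1) (rdim X1)"
    using assoc_mult_mat[OF qc fc ac] exact_at_mult_zero[OF mult_carrier_mat[OF fc ac] qc exact_q] by simp
  then obtain f2 where f2: "f2 \<in> carrier_mat (rdim C1) (rdim X2)" and qf: "q * f = f2 * b"
    using factor_through_cokernel[OF ac bc ext.hyps(7,8) mult_carrier_mat[OF qc fc]] by blast
  have f2h: "is_hom X2 C1 f2"
    by (rule is_hom_factor_epi[OF C1 X2 ext.hyps(3) ext.hyps(5,7) is_hom_mult[OF ext.hyps(3) Y C1 f q] f2 qf])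
  have IH2: "filt_kernels X2 f2" "filt_cokernels C1 f2" using ext.IH(2)[OF \<open>filt C1\<close> f2h] by auto
  show ?case
    using filt_kernels_domain_ext[OF X1 ext.hyps(3) X2 Y C1 ext.hyps(4-8) f q exact_q f2h qf IH1(1) IH2(1)]
      filt_cokernels_domain_ext[OF Y C1 ac bc ext.hyps(7) f q \<open>epi_mat q\<close> exact_q f2h qf IH2(2)]
    by blast
qed

lemma filt_wide: "wide \<iota>G {X. filt X}"
  unfolding wide_def subcat_def closed_kernels_def closed_cokernels_def closed_extensions_def
  using filt_mods filt_iso filt_zero_rep filt.ext filt_kernels_cokernels
  unfolding filt_kernels_def filt_cokernels_def by blast

end

section \<open>The lattice of shadows\<close>

lemma is_glb_Int: "x \<inter> y \<in> P \<Longrightarrow> is_glb P {x, y} (x \<inter> y)"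
  unfolding is_glb_def by auto

lemma is_glb_Int_unique: "is_glb P {x, y} z \<Longrightarrow> x \<inter> y \<in> P \<Longrightarrow> z = x \<inter> y"
  unfolding is_glb_def by auto

lemma meet_semilattice_map_Int:
  assumes P: "\<And>x y. x \<in> P \<Longrightarrow> y \<in> P \<Longrightarrow> x \<inter> y \<in> P"
    and Q: "\<And>x y. x \<in> Q \<Longrightarrow> y \<in> Q \<Longrightarrow> x \<inter> y \<in> Q"
    and f: "\<And>x. x \<in> P \<Longrightarrow> f x \<in> Q"
    and f_Int: "\<And>x y. f (x \<inter> y) = f x \<inter> f y"
  shows "meet_semilattice_map P Q f"
  unfolding meet_semilattice_map_def meet_semilattice_poset_def
proof (intro conjI ballI allI impI)
  fix x y assume "x \<in> P" "y \<in> P"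
  then show "\<exists>z. is_glb P {x, y} z" using is_glb_Int[OF P] by blast
next
  fix x y assume "x \<in> Q" "y \<in> Q"
  then show "\<exists>z. is_glb Q {x, y} z" using is_glb_Int[OF Q] by blast
next
  fix x y z assume x: "x \<in> P" and y: "y \<in> P" and "is_glb P {x, y} z"
  then have "z = x \<inter> y" using is_glb_Int_unique P by blast
  then show "is_glb Q {f x, f y} (f z)" using is_glb_Int[OF Q[OF f[OF x] f[OF y]]] f_Int by simp
qed (rule f)

lemma complete_lattice_poset_Inter:
  assumes Inter: "\<And>A. A \<subseteq> P \<Longrightarrow> U \<inter> \<Inter>A \<in> P" and sub: "\<And>x. x \<in> P \<Longrightarrow> x \<subseteq> U"
  shows "complete_lattice_poset P"
  unfolding complete_lattice_poset_def
proof (intro allI impI conjI)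
  fix A assume A: "A \<subseteq> P"
  have "U \<inter> \<Inter>{t \<in> P. \<forall>a\<in>A. a \<subseteq> t} \<in> P" by (rule Inter) blast
  then show "\<exists>s. is_lub P A s" unfolding is_lub_def using A sub by blast
  show "\<exists>s. is_glb P A s" unfolding is_glb_def using Inter[OF A] sub by blast
qed

lemma wideset_Int: "x \<in> wideset \<iota> \<Longrightarrow> y \<in> wideset \<iota> \<Longrightarrow> x \<inter> y \<in> wideset \<iota>"
  unfolding wideset_def using wide_Int by blast

lemma widshad_subset: "x \<in> widshad \<iota> M \<Longrightarrow> x \<subseteq> M"
  unfolding widshad_def by auto

lemma widshad_Inter:
  assumes M: "subcat \<iota> M" and A: "A \<subseteq> widshad \<iota> M"
  shows "M \<inter> \<Inter>A \<in> widshad \<iota> M"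
proof -
  have "\<forall>a\<in>A. \<exists>W. wide \<iota> W \<and> a = W \<inter> M" using A unfolding widshad_def by auto
  then obtain W where W: "\<And>a. a \<in> A \<Longrightarrow> wide \<iota> (W a) \<and> a = W a \<inter> M" by metis
  have "wide \<iota> (mods \<iota> \<inter> \<Inter>(W ` A))" using W by (intro wide_Inter) auto
  moreover have "(mods \<iota> \<inter> \<Inter>(W ` A)) \<inter> M = M \<inter> \<Inter>A" using W M unfolding subcat_def by blast
  ultimately show ?thesis unfolding widshad_def by blast
qed

lemma widshad_Int:
  assumes M: "subcat \<iota> M" and x: "x \<in> widshad \<iota> M" and y: "y \<in> widshad \<iota> M"
  shows "x \<inter> y \<in> widshad \<iota> M"
proof -
  have "M \<inter> \<Inter>{x, y} = x \<inter> y" using widshad_subset[OF x] by auto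
  then show ?thesis using widshad_Inter[OF M, of "{x, y}"] x y by simp
qed

context algebra_epi
begin

lemma res_mod_surj: "res_mod \<phi> \<iota>L ` wideset \<iota>G = wideset \<iota>L"
proof
  show "res_mod \<phi> \<iota>L ` wideset \<iota>G \<subseteq> wideset \<iota>L" using wide_res_mod unfolding wideset_def by blast
  show "wideset \<iota>L \<subseteq> res_mod \<phi> \<iota>L ` wideset \<iota>G"
  proof
    fix V assume "V \<in> wideset \<iota>L"
    then interpret filtration \<iota>G \<iota>L \<phi> V by unfold_locales (simp add: wideset_def)
    have "res_mod \<phi> \<iota>L {X. filt X} = V"
      using filt_pullback_iff wide_subset_mods[OF V] unfolding res_mod_def by auto
    then show "V \<in> res_mod \<phi> \<iota>L ` wideset \<iota>G" using filt_wide unfolding wideset_def by blast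
  qed
qed

end

theorem lemma7p2:
  fixes \<iota>G :: "'k::field \<Rightarrow> 'g::{ring,monoid_mult}"
    and \<iota>L :: "'k \<Rightarrow> 'l::{ring,monoid_mult}"
    and \<phi> :: "'g \<Rightarrow> 'l"
    and M :: "('g \<Rightarrow> 'k mat) set"
  assumes "fd_algebra \<iota>G" and "fd_algebra \<iota>L" and "alg_epi \<iota>G \<iota>L \<phi>"
    and "subcat \<iota>G M"
    and "\<forall>\<sigma>\<in>mods \<iota>L. \<sigma> \<circ> \<phi> \<in> M"
  shows "complete_lattice_poset (widshad \<iota>G M)
    \<and> meet_semilattice_map (wideset \<iota>G) (widshad \<iota>G M) (\<lambda>W. W \<inter> M)
    \<and> (\<lambda>W. W \<inter> M) ` wideset \<iota>G = widshad \<iota>G M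
    \<and> meet_semilattice_map (widshad \<iota>G M) (wideset \<iota>L) (res_mod \<phi> \<iota>L)
    \<and> res_mod \<phi> \<iota>L ` widshad \<iota>G M = wideset \<iota>L"
proof -
  interpret algebra_epi \<iota>G \<iota>L \<phi> using assms(3) by unfold_locales
  have shadows: "widshad \<iota>G M = (\<lambda>W. W \<inter> M) ` wideset \<iota>G" unfolding widshad_def wideset_def by blast
  have res_mod_shadow: "res_mod \<phi> \<iota>L (W \<inter> M) = res_mod \<phi> \<iota>L W" for W
    using assms(5) unfolding res_mod_def by blast
  have res_mod_widshad: "res_mod \<phi> \<iota>L ` widshad \<iota>G M = wideset \<iota>L"
    using res_mod_surj unfolding shadows image_comp comp_def res_mod_shadow .
  have "complete_lattice_poset (widshad \<iota>G M)"
    by (rule complete_lattice_poset_Inter[OF widshad_Inter[OF assms(4)] widshad_subset])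
  moreover have "meet_semilattice_map (wideset \<iota>G) (widshad \<iota>G M) (\<lambda>W. W \<inter> M)"
    by (rule meet_semilattice_map_Int[OF wideset_Int widshad_Int[OF assms(4)]]) (auto simp: shadows)
  moreover have "meet_semilattice_map (widshad \<iota>G M) (wideset \<iota>L) (res_mod \<phi> \<iota>L)"
    by (rule meet_semilattice_map_Int[OF widshad_Int[OF assms(4)] wideset_Int _ res_mod_Int])
      (auto simp flip: res_mod_widshad)
  ultimately show ?thesis using shadows res_mod_widshad by blast
qed

end
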